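(* Let $m$ be odd, $\Omega\subseteq\mathbb R^m$ open, and $f\in\mathcal C^4(\Omega;\mathbb R_{0,m})$. Suppose $f$ is harmonic in $\Omega$ (respectively, inframonogenic in $\Omega$). Then $f$ is also inframonogenic (respectively, harmonic) in $\Omega$ if and only if any one of the following holds: (i) $\partial_{\underline x}^3\big(f(\underline x)\underline x\big)=0$ in $\Omega$; (ii) $\big(\underline xf(\underline x)\big)\partial_{\underline x}^3=0$ in $\Omega$; (iii) $\Delta_{\underline x}^2\big(\underline xf(\underline x)\underline x\big)=0$ in $\Omega$.
   Context: $\mathbb R_{0,m}$ is the $2^m$-dimensional real Clifford algebra generated by the orthonormal basis $e_1,\dots,e_m$ of $\mathbb R^m$ with relations $e_je_k+e_ke_j=-2\delta_{jk}$. A point of $\mathbb R^m$ is identified with $\underline x=\sum_j x_je_j$. The Dirac operator $\partial_{\underline x}=\sum_j e_j\partial_{x_j}$ acts from the left, $\partial_{\underline x}f=\sum_j e_j\partial_{x_j}f$, or from the right, $f\partial_{\underline x}=\sum_j(\partial_{x_j}f)e_j$; powers denote iterated application on the same side. $f\in\mathcal C^2$ is inframonogenic if $\partial_{\underline x}f\partial_{\underline x}=\sum_{i,j}e_i(\partial_{x_i}\partial_{x_j}f)e_j=0$. $\Delta_{\underline x}=\sum_j\partial_{x_j}^2$. *)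

theory Defs
  imports "HOL-Analysis.Analysis" "HOL-Library.Function_Algebras"
begin


text \<open>The Clifford algebra R_{0,m}, m = CARD('n). An element is a real coefficient
  function on basis blades e_A, A a subset of the (linearly ordered, finite) index
  type 'n; e_A = e_a1 ... e_ak with a1 < ... < ak.\<close>

type_synonym 'n clifford = "'n set \<Rightarrow> real"

definition blade_sign :: "'n::{finite,linorder} set \<Rightarrow> 'n::{finite,linorder} set \<Rightarrow> real" where
  "blade_sign A B = (-1) ^ (card {(a, b). a \<in> A \<and> b \<in> B \<and> b < a} + card (A \<inter> B))"

definition cl_mult :: "'n::{finite,linorder} clifford \<Rightarrow> 'n::{finite,linorder} clifford \<Rightarrow> 'n::{finite,linorder} clifford"
  (infixl "\<odot>" 70) where
  "a \<odot> b = (\<lambda>C. \<Sum>A\<in>UNIV. \<Sum>B\<in>UNIV.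
      if A \<union> B - A \<inter> B = C then blade_sign A B * a A * b B else 0)"

definition cl_e :: "'n::{finite,linorder} \<Rightarrow> 'n::{finite,linorder} clifford" where
  "cl_e j = (\<lambda>A. if A = {j} then 1 else 0)"

definition cl_vec :: "real ^ 'n::{finite,linorder} \<Rightarrow> 'n::{finite,linorder} clifford" where
  "cl_vec x = (\<Sum>j\<in>UNIV. (\<lambda>A. x $ j * cl_e j A))"

definition rpartial :: "'n::{finite,linorder} \<Rightarrow> (real ^ 'n::{finite,linorder} \<Rightarrow> real) \<Rightarrow> real ^ 'n::{finite,linorder} \<Rightarrow> real" where
  "rpartial j g x = deriv (\<lambda>t. g (x + t *\<^sub>R axis j 1)) 0"

definition cpartial :: "'n::{finite,linorder} \<Rightarrow> (real ^ 'n::{finite,linorder} \<Rightarrow> 'n::{finite,linorder} clifford) \<Rightarrow> real ^ 'n::{finite,linorder} \<Rightarrow> 'n::{finite,linorder} clifford" where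
  "cpartial j f x = (\<lambda>A. rpartial j (\<lambda>y. f y A) x)"

fun Ck_real :: "nat \<Rightarrow> (real ^ 'n::{finite,linorder}) set \<Rightarrow> (real ^ 'n::{finite,linorder} \<Rightarrow> real) \<Rightarrow> bool" where
  "Ck_real 0 \<Omega> g = continuous_on \<Omega> g"
| "Ck_real (Suc k) \<Omega> g = (continuous_on \<Omega> g \<and>
      (\<forall>x\<in>\<Omega>. \<forall>j. (\<lambda>t. g (x + t *\<^sub>R axis j 1)) differentiable (at 0)) \<and>
      (\<forall>j. Ck_real k \<Omega> (rpartial j g)))"

definition Ck :: "nat \<Rightarrow> (real ^ 'n::{finite,linorder}) set \<Rightarrow> (real ^ 'n::{finite,linorder} \<Rightarrow> 'n::{finite,linorder} clifford) \<Rightarrow> bool" where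
  "Ck k \<Omega> f = (\<forall>A. Ck_real k \<Omega> (\<lambda>x. f x A))"

definition dirac_l :: "(real ^ 'n::{finite,linorder} \<Rightarrow> 'n::{finite,linorder} clifford) \<Rightarrow> real ^ 'n::{finite,linorder} \<Rightarrow> 'n::{finite,linorder} clifford" where
  "dirac_l f x = (\<Sum>j\<in>UNIV. cl_e j \<odot> cpartial j f x)"

definition dirac_r :: "(real ^ 'n::{finite,linorder} \<Rightarrow> 'n::{finite,linorder} clifford) \<Rightarrow> real ^ 'n::{finite,linorder} \<Rightarrow> 'n::{finite,linorder} clifford" where
  "dirac_r f x = (\<Sum>j\<in>UNIV. cpartial j f x \<odot> cl_e j)"

definition laplace :: "(real ^ 'n::{finite,linorder} \<Rightarrow> 'n::{finite,linorder} clifford) \<Rightarrow> real ^ 'n::{finite,linorder} \<Rightarrow> 'n::{finite,linorder} clifford" where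
  "laplace f x = (\<Sum>j\<in>UNIV. cpartial j (cpartial j f) x)"

definition harmonic_on :: "(real ^ 'n::{finite,linorder}) set \<Rightarrow> (real ^ 'n::{finite,linorder} \<Rightarrow> 'n::{finite,linorder} clifford) \<Rightarrow> bool" where
  "harmonic_on \<Omega> f = (\<forall>x\<in>\<Omega>. laplace f x = 0)"

definition inframonogenic_on :: "(real ^ 'n::{finite,linorder}) set \<Rightarrow> (real ^ 'n::{finite,linorder} \<Rightarrow> 'n::{finite,linorder} clifford) \<Rightarrow> bool" where
  "inframonogenic_on \<Omega> f =
     (\<forall>x\<in>\<Omega>. (\<Sum>i\<in>UNIV. \<Sum>j\<in>UNIV. cl_e i \<odot> cpartial i (cpartial j f) x \<odot> cl_e j) = 0)"


end

theory Submission
  imports Defs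
begin

(* Write D f and f D for the left and right Dirac
   operators and T a = \<Sum>j e_j a e_j for the "sandwich" operator of the Clifford algebra.
   1. Algebra: e_i e_j + e_j e_i = -2\<delta>_ij, and T acts on a blade of grade k by the
      factor (-1)^k (2k - m); for odd m this never vanishes, so T is injective.
   2. Calculus: partial derivatives are one-dimensional derivatives along coordinate
      lines; they are linear, local, obey a product rule with the coordinate functions,
      preserve the C^k classes, and commute on C^2 (Schwarz, proved by a double mean
      value argument).
   3. Operator identities for f in C^2: D (D f) = -\<Delta> f = (f D) D, D (f D) = (D f) D, and
      the product rules D (f x) = T f + (D f) x, D (T f) + T (D f) = -2 f D, etc.
   4. Expanding the three expressions with these rules gives, for f in C^4,
      D^3 (f x), (x f) D^3 and \<Delta>^2 (x f x) as explicit combinations of D f D, T (\<Delta> f) and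
      terms that vanish as soon as f is harmonic or inframonogenic.
   5. If f is harmonic, each expression is a nonzero multiple of D f D; if f is
      inframonogenic, each is a nonzero multiple of T (\<Delta> f).  Injectivity of T (m odd)
      gives the theorem. *)

subsection \<open>Multiplication by generators\<close>

text \<open>Multiplying a blade by a generator e_j toggles the membership of j.\<close>

definition toggle :: "'n::{finite,linorder} \<Rightarrow> 'n set \<Rightarrow> 'n set" where
  "toggle j C = (if j \<in> C then C - {j} else insert j C)"

lemma toggle_toggle [simp]: "toggle j (toggle j C) = C"
  unfolding toggle_def by auto

lemma toggle_commute: "toggle i (toggle j C) = toggle j (toggle i C)"
  unfolding toggle_def by auto

lemma symdiff_singleton_left_iff: "({j} \<union> B - {j} \<inter> B = C) \<longleftrightarrow> B = toggle j C"
  unfolding toggle_def by auto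

lemma symdiff_singleton_right_iff: "(A \<union> {j} - A \<inter> {j} = C) \<longleftrightarrow> A = toggle j C"
  unfolding toggle_def by auto

text \<open>Explicit signs of e_j e_B and e_B e_j: count the elements of B passed by j.\<close>

lemma blade_sign_singleton_left:
  "blade_sign {j} B = (-1)^card {b\<in>B. b<j} * (if j\<in>B then -1 else 1)"
proof -
  have "{(a, b). a \<in> {j} \<and> b \<in> B \<and> b < a} = Pair j ` {b\<in>B. b<j}" by auto
  hence "card {(a, b). a \<in> {j} \<and> b \<in> B \<and> b < a} = card {b\<in>B. b<j}"
    by (simp add: card_image inj_on_def)
  moreover have "card ({j} \<inter> B) = (if j\<in>B then 1 else 0)" by auto
  ultimately show ?thesis unfolding blade_sign_def by (simp add: power_add)
qed

lemma blade_sign_singleton_right: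
  "blade_sign B {j} = (-1)^card {b\<in>B. j<b} * (if j\<in>B then -1 else 1)"
proof -
  have "{(a, b). a \<in> B \<and> b \<in> {j} \<and> b < a} = (\<lambda>a. (a,j)) ` {b\<in>B. j<b}" by auto
  hence "card {(a, b). a \<in> B \<and> b \<in> {j} \<and> b < a} = card {b\<in>B. j<b}"
    by (simp add: card_image inj_on_def)
  moreover have "card (B \<inter> {j}) = (if j\<in>B then 1 else 0)" by auto
  ultimately show ?thesis unfolding blade_sign_def by (simp add: power_add)
qed

lemma neg_one_power_card_toggle:
  fixes B :: "'a::finite set"
  shows "(-1::real)^card {b\<in>(if k \<in> B then B - {k} else insert k B). P b} =
     (if P k then -1 else 1) * (-1)^card {b\<in>B. P b}"
proof (cases "P k")
  case True
  show ?thesis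
  proof (cases "k \<in> B")
    case True
    have "{b\<in>B - {k}. P b} = {b\<in>B. P b} - {k}" by auto
    moreover have "k \<in> {b\<in>B. P b}" using True \<open>P k\<close> by auto
    ultimately have "card {b\<in>B - {k}. P b} = card {b\<in>B. P b} - 1" by simp
    moreover have "card {b\<in>B. P b} \<ge> 1"
      using \<open>k \<in> {b\<in>B. P b}\<close> by (metis One_nat_def Suc_leI card_gt_0_iff empty_iff finite)
    ultimately show ?thesis using True \<open>P k\<close>
      by (cases "card {b\<in>B. P b}") auto
  next
    case False
    have "{b\<in>insert k B. P b} = insert k {b\<in>B. P b}" using \<open>P k\<close> by auto
    thus ?thesis using False \<open>P k\<close> by simp
  qed
next
  case False
  hence "{b\<in>(if k \<in> B then B - {k} else insert k B). P b} = {b\<in>B. P b}" by auto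
  thus ?thesis using False by simp
qed

lemma blade_sign_left_toggle: "blade_sign {j} (toggle k B) =
   (if k < j then -1 else 1) * (if k = j then -1 else 1) * blade_sign {j} B"
  unfolding blade_sign_singleton_left toggle_def
  using neg_one_power_card_toggle[of k B "\<lambda>b. b < j"] by (auto simp: toggle_def)

lemma blade_sign_right_toggle: "blade_sign (toggle k B) {j} =
   (if j < k then -1 else 1) * (if k = j then -1 else 1) * blade_sign B {j}"
  unfolding blade_sign_singleton_right toggle_def
  using neg_one_power_card_toggle[of k B "\<lambda>b. j < b"] by (auto simp: toggle_def)

lemma gen_mult_left_apply: "(cl_e j \<odot> a) C = blade_sign {j} (toggle j C) * a (toggle j C)"
proof -
  have "(cl_e j \<odot> a) C = (\<Sum>A\<in>UNIV. \<Sum>B\<in>UNIV. if B = toggle j C then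
           (if A = {j} then blade_sign {j} B * a B else 0) else 0)"
    unfolding cl_mult_def cl_e_def
  proof (intro sum.cong refl)
    fix A B :: "'a set"
    show "(if A \<union> B - A \<inter> B = C then blade_sign A B * (if A = {j} then 1 else 0) * a B else 0) =
       (if B = toggle j C then if A = {j} then blade_sign {j} B * a B else 0 else 0)"
    proof (cases "A = {j}")
      case True
      then show ?thesis using symdiff_singleton_left_iff[of j B C] by simp
    qed simp
  qed
  also have "\<dots> = blade_sign {j} (toggle j C) * a (toggle j C)"
    by (simp add: sum.delta)
  finally show ?thesis .
qed

lemma gen_mult_right_apply: "(a \<odot> cl_e j) C = blade_sign (toggle j C) {j} * a (toggle j C)"
proof -
  have "(a \<odot> cl_e j) C = (\<Sum>A\<in>UNIV. \<Sum>B\<in>UNIV. if B = {j} then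
           (if A = toggle j C then blade_sign A {j} * a A else 0) else 0)"
    unfolding cl_mult_def cl_e_def
  proof (intro sum.cong refl)
    fix A B :: "'a set"
    show "(if A \<union> B - A \<inter> B = C then blade_sign A B * a A * (if B = {j} then 1 else 0) else 0) =
       (if B = {j} then if A = toggle j C then blade_sign A {j} * a A else 0 else 0)"
    proof (cases "B = {j}")
      case True
      then show ?thesis using symdiff_singleton_right_iff[of A j C] by simp
    qed simp
  qed
  also have "\<dots> = blade_sign (toggle j C) {j} * a (toggle j C)"
    by (simp add: sum.delta)
  finally show ?thesis .
qed

definition cl_scale :: "real \<Rightarrow> 'n::{finite,linorder} clifford \<Rightarrow> 'n clifford" where
  "cl_scale r a = (\<lambda>A. r * a A)"

lemma cl_scale_apply [simp]: "cl_scale r a A = r * a A"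
  by (simp add: cl_scale_def)

lemma blade_sign_square [simp]: "blade_sign A B * blade_sign A B = 1"
  unfolding blade_sign_def by (simp add: power_mult_distrib[symmetric] flip: power_add mult_2)

lemma blade_sign_square_mult [simp]: "blade_sign A B * (blade_sign A B * z) = z"
  by (simp add: mult.assoc[symmetric])

lemma gen_anticommute_left: "cl_e i \<odot> (cl_e j \<odot> a) + cl_e j \<odot> (cl_e i \<odot> a) =
    (if i = j then cl_scale (-2) a else 0)"
proof (rule ext)
  fix C
  show "(cl_e i \<odot> (cl_e j \<odot> a) + cl_e j \<odot> (cl_e i \<odot> a)) C = (if i = j then cl_scale (-2) a else 0) C"
    by (cases i j rule: linorder_cases)
      (auto simp: gen_mult_left_apply blade_sign_left_toggle toggle_commute[of j i] algebra_simps)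
qed

lemma gen_anticommute_right: "(a \<odot> cl_e j) \<odot> cl_e i + (a \<odot> cl_e i) \<odot> cl_e j =
    (if i = j then cl_scale (-2) a else 0)"
proof (rule ext)
  fix C
  show "((a \<odot> cl_e j) \<odot> cl_e i + (a \<odot> cl_e i) \<odot> cl_e j) C = (if i = j then cl_scale (-2) a else 0) C"
    by (cases i j rule: linorder_cases)
      (auto simp: gen_mult_right_apply blade_sign_right_toggle toggle_commute[of j i] algebra_simps)
qed

lemma gen_mult_assoc: "(cl_e i \<odot> a) \<odot> cl_e j = cl_e i \<odot> (a \<odot> cl_e j)"
proof (rule ext)
  fix C
  show "((cl_e i \<odot> a) \<odot> cl_e j) C = (cl_e i \<odot> (a \<odot> cl_e j)) C"
    by (cases i j rule: linorder_cases)
      (auto simp: gen_mult_right_apply gen_mult_left_apply blade_sign_right_toggle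
        blade_sign_left_toggle toggle_commute[of j i] algebra_simps)
qed

lemma sum_fun_apply: "(\<Sum>k\<in>S. u k) x = (\<Sum>k\<in>S. u k x)"
  by (induction S rule: infinite_finite_induct) auto

definition blade_coeff :: "'n::{finite,linorder} set \<Rightarrow> 'n set \<Rightarrow> 'n set \<Rightarrow> real" where
  "blade_coeff A B C = (if A \<union> B - A \<inter> B = C then blade_sign A B else 0)"

lemma cl_mult_blade_coeff: "(a \<odot> b) C = (\<Sum>A\<in>UNIV. \<Sum>B\<in>UNIV. a A * b B * blade_coeff A B C)"
  unfolding cl_mult_def blade_coeff_def by (intro sum.cong refl) auto

lemma cl_mult_add_left: "(u + v) \<odot> b = u \<odot> b + v \<odot> b"
  by (rule ext) (simp add: cl_mult_blade_coeff algebra_simps sum.distrib)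

lemma cl_mult_add_right: "b \<odot> (u + v) = b \<odot> u + b \<odot> v"
  by (rule ext) (simp add: cl_mult_blade_coeff algebra_simps sum.distrib)

lemma cl_mult_zero_left[simp]: "0 \<odot> b = 0"
  by (rule ext) (simp add: cl_mult_blade_coeff)

lemma cl_mult_zero_right[simp]: "b \<odot> 0 = 0"
  by (rule ext) (simp add: cl_mult_blade_coeff)

lemma cl_mult_scale_left: "cl_scale r u \<odot> b = cl_scale r (u \<odot> b)"
  by (rule ext) (simp add: cl_mult_blade_coeff sum_distrib_left mult.assoc)

lemma cl_mult_scale_right: "b \<odot> cl_scale r u = cl_scale r (b \<odot> u)"
  by (rule ext) (simp add: cl_mult_blade_coeff sum_distrib_left algebra_simps)

lemma cl_mult_minus_left: "(- u) \<odot> b = - (u \<odot> b)"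
  by (rule ext) (simp add: cl_mult_blade_coeff sum_negf)

lemma cl_mult_minus_right: "b \<odot> (- u) = - (b \<odot> u)"
  by (rule ext) (simp add: cl_mult_blade_coeff sum_negf)

lemma cl_mult_sum_left: "(\<Sum>k\<in>S. u k) \<odot> b = (\<Sum>k\<in>S. u k \<odot> b)"
proof (induction S rule: infinite_finite_induct)
  case (insert x F) thus ?case by (metis cl_mult_add_left sum.insert)
next
  case (infinite A) thus ?case by (metis sum.infinite cl_mult_zero_left)
qed (simp only: sum.empty cl_mult_zero_left)

lemma cl_mult_sum_right: "b \<odot> (\<Sum>k\<in>S. u k) = (\<Sum>k\<in>S. b \<odot> u k)"
proof (induction S rule: infinite_finite_induct)
  case (insert x F) thus ?case by (metis cl_mult_add_right sum.insert)
next
  case (infinite A) thus ?case by (metis sum.infinite cl_mult_zero_right)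
qed (simp only: sum.empty cl_mult_zero_right)

lemma cl_scale_add: "cl_scale r (a + b) = cl_scale r a + cl_scale r b"
  by (rule ext) (simp add: algebra_simps)

lemma cl_scale_zero [simp]: "cl_scale r 0 = 0"
  by (rule ext) simp

lemma cl_scale_sum: "cl_scale r (\<Sum>k\<in>S. u k) = (\<Sum>k\<in>S. cl_scale r (u k))"
  by (rule ext) (simp add: sum_fun_apply sum_distrib_left)

lemma cl_scale_scale: "cl_scale r (cl_scale s a) = cl_scale (r * s) a"
  by (rule ext) simp

subsection \<open>The sandwich operator\<close>

text \<open>T a = \<Sum>j e_j a e_j.  It is diagonal in the blade basis: on a blade of grade k it
  multiplies by (-1)^k (2k - m).  Hence it is injective when m is odd.\<close>

definition sandwich :: "'n::{finite,linorder} clifford \<Rightarrow> 'n clifford" where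
  "sandwich a = (\<Sum>j\<in>UNIV. cl_e j \<odot> a \<odot> cl_e j)"

text \<open>The element j splits a blade C into the parts below and above j; hence
  e_C e_j and e_j e_C together pass every element of C exactly once.\<close>

lemma card_split_at:
  fixes C :: "'n::{finite,linorder} set"
  shows "card {b\<in>C. b<j} + card {b\<in>C. j<b} + (if j\<in>C then 1 else 0) = card C"
proof -
  have eq: "({b\<in>C. b<j} \<union> {b\<in>C. j<b}) \<union> (C \<inter> {j}) = C" by auto
  have "card (({b\<in>C. b<j} \<union> {b\<in>C. j<b}) \<union> (C \<inter> {j})) =
        card ({b\<in>C. b<j} \<union> {b\<in>C. j<b}) + card (C \<inter> {j})"
    by (rule card_Un_disjoint) auto
  moreover have "card ({b\<in>C. b<j} \<union> {b\<in>C. j<b}) = card {b\<in>C. b<j} + card {b\<in>C. j<b}"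
    by (rule card_Un_disjoint) auto
  moreover have "card (C \<inter> {j}) = (if j\<in>C then 1 else 0)" by auto
  ultimately show ?thesis unfolding eq by simp
qed

lemma blade_sign_swap_singleton:
  "blade_sign C {j} * blade_sign {j} C = (-1)^card C * (if j\<in>C then -1 else 1)"
proof -
  have c: "card C = card {b\<in>C. b<j} + card {b\<in>C. j<b} + (if j\<in>C then 1 else 0)"
    using card_split_at[of C j] by simp
  have e: "(-1::real)^card C = (-1)^(card {b\<in>C. b<j} + card {b\<in>C. j<b}) * (if j\<in>C then -1 else 1)"
    by (subst c) (simp add: power_add)
  show ?thesis unfolding blade_sign_singleton_right blade_sign_singleton_left e
    by (auto simp: power_add algebra_simps)
qed

lemma sum_sign_membership:
  "(\<Sum>j\<in>UNIV. if j\<in>C then -1 else (1::real)) =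
     real CARD('n::{finite,linorder}) - 2 * real (card (C::'n set))"
proof -
  have "(\<Sum>j\<in>UNIV. if j\<in>C then -1 else (1::real)) = - real (card C) + real (card (UNIV - C))"
    by (simp add: sum.If_cases Int_absorb1 Compl_eq_Diff_UNIV)
  also have "card (UNIV - C) = CARD('n) - card C" by (metis card_Diff_subset finite subset_UNIV)
  finally show ?thesis using card_mono[of UNIV C] by (simp add: of_nat_diff)
qed

lemma sandwich_apply:
  "sandwich a C = (-1)^card C * (2 * real (card C) - real CARD('n::{finite,linorder})) * a (C::'n set)"
proof -
  have "sandwich a C = (\<Sum>j\<in>UNIV. - ((-1)^card C * (if j\<in>C then -1 else 1)) * a C)"
    unfolding sandwich_def sum_fun_apply
  proof (intro sum.cong refl)
    fix j
    have "(cl_e j \<odot> a \<odot> cl_e j) C = blade_sign (toggle j C) {j} * blade_sign {j} C * a C"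
      by (simp add: gen_mult_right_apply gen_mult_left_apply)
    also have "\<dots> = - (blade_sign C {j} * blade_sign {j} C) * a C"
      by (simp add: blade_sign_right_toggle)
    finally show "(cl_e j \<odot> a \<odot> cl_e j) C = - ((-1)^card C * (if j\<in>C then -1 else 1)) * a C"
      by (simp add: blade_sign_swap_singleton)
  qed
  also have "\<dots> = - ((-1)^card C * a C) * (\<Sum>j\<in>UNIV. if j\<in>C then -1 else (1::real))"
    by (subst sum_distrib_left) (intro sum.cong refl, simp)
  also have "\<dots> = (-1)^card C * (2 * real (card C) - real CARD('n)) * a C"
    by (simp add: sum_sign_membership algebra_simps)
  finally show ?thesis .
qed

lemma sandwich_eq_0_iff:
  assumes "odd CARD('n::{finite,linorder})"
  shows "sandwich (a::'n clifford) = 0 \<longleftrightarrow> a = 0"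
proof
  assume h: "sandwich a = 0"
  show "a = 0"
  proof (rule ext)
    fix C :: "'n set"
    have "2 * card C \<noteq> CARD('n)" using assms by (metis dvd_triv_left)
    hence "real (2 * card C) \<noteq> real CARD('n)" by (metis of_nat_eq_iff)
    hence "2 * real (card C) - real CARD('n) \<noteq> 0" by simp
    moreover have "sandwich a C = 0" using h by simp
    ultimately show "a C = 0 C" by (simp add: sandwich_apply)
  qed
qed (simp add: sandwich_def)

subsection \<open>Derivatives along coordinate lines\<close>

lemma DERIV_imp_real_differentiable:
  fixes f :: "real \<Rightarrow> real"
  shows "DERIV f x :> D \<Longrightarrow> f differentiable at x"
  by (metis DERIV_deriv_iff_real_differentiable DERIV_imp_deriv)

lemma rpartial_DERIV:
  fixes g :: "real ^ 'n::{finite,linorder} \<Rightarrow> real"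
  assumes "(\<lambda>t. g (x + t *\<^sub>R axis j 1)) differentiable (at 0)"
  shows "DERIV (\<lambda>t. g (x + t *\<^sub>R axis j (1::real))) 0 :> rpartial j g x"
  using assms unfolding rpartial_def by (simp add: DERIV_deriv_iff_real_differentiable)

lemma rpartial_eqI:
  fixes g :: "real ^ 'n::{finite,linorder} \<Rightarrow> real"
  assumes "DERIV (\<lambda>t. g (x + t *\<^sub>R axis j (1::real))) 0 :> D"
  shows "rpartial j g x = D"
  using assms unfolding rpartial_def by (rule DERIV_imp_deriv)

definition line_diff ::
    "(real ^ 'n::{finite,linorder} \<Rightarrow> real) \<Rightarrow> real ^ 'n::{finite,linorder} \<Rightarrow> bool" where
  "line_diff g x = (\<forall>j. (\<lambda>t. g (x + t *\<^sub>R axis j 1)) differentiable (at 0))"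

lemma line_diff_DERIV:
  "line_diff g x \<Longrightarrow> DERIV (\<lambda>t. g (x + t *\<^sub>R axis j (1::real))) 0 :> rpartial j g x"
  unfolding line_diff_def by (simp add: rpartial_DERIV)

lemma line_diff_add: assumes "line_diff g x" "line_diff h x" shows "line_diff (\<lambda>y. g y + h y) x"
  unfolding line_diff_def[of "\<lambda>y. g y + h y"]
proof
  fix j show "(\<lambda>t. g (x + t *\<^sub>R axis j 1) + h (x + t *\<^sub>R axis j 1)) differentiable at 0"
    by (rule DERIV_imp_real_differentiable[OF DERIV_add[OF line_diff_DERIV[OF assms(1)] line_diff_DERIV[OF assms(2)]]])
qed

lemma rpartial_add: "line_diff g x \<Longrightarrow> line_diff h x \<Longrightarrow>
   rpartial j (\<lambda>y. g y + h y) x = rpartial j g x + rpartial j h x"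
  by (rule rpartial_eqI, rule DERIV_add) (auto simp: line_diff_DERIV)

lemma line_diff_cmult: assumes "line_diff g x" shows "line_diff (\<lambda>y. c * g y) x"
  unfolding line_diff_def[of "\<lambda>y. c * g y"]
proof
  fix j show "(\<lambda>t. c * g (x + t *\<^sub>R axis j 1)) differentiable at 0"
    by (rule DERIV_imp_real_differentiable[OF DERIV_cmult[OF line_diff_DERIV[OF assms(1)]]])
qed

lemma rpartial_cmult: "line_diff g x \<Longrightarrow> rpartial j (\<lambda>y. c * g y) x = c * rpartial j g x"
  by (rule rpartial_eqI, rule DERIV_cmult) (auto simp: line_diff_DERIV)

lemma line_diff_const: "line_diff (\<lambda>y. c) x"
  unfolding line_diff_def by simp

lemma rpartial_const: "rpartial j (\<lambda>y. c) x = 0"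
  by (rule rpartial_eqI) simp

lemma rpartial_sum: "finite S \<Longrightarrow> (\<And>k. k \<in> S \<Longrightarrow> line_diff (g k) x) \<Longrightarrow>
  rpartial j (\<lambda>y. \<Sum>k\<in>S. g k y) x = (\<Sum>k\<in>S. rpartial j (g k) x)"
  by (rule rpartial_eqI, rule DERIV_sum, rule line_diff_DERIV) simp

lemma line_coord_DERIV: "DERIV (\<lambda>t. (x + t *\<^sub>R axis j 1) $ i) 0 :> (if i = j then 1 else (0::real))"
proof -
  have "(\<lambda>t. (x + t *\<^sub>R axis j 1) $ i) = (\<lambda>t. x $ i + t * (if i = j then 1 else 0))"
    by (simp add: axis_def)
  moreover have "DERIV (\<lambda>t. x $ i + t * (if i = j then 1 else (0::real))) 0 :> (if i = j then 1 else 0)"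
    by (auto intro!: derivative_eq_intros)
  ultimately show ?thesis by simp
qed

lemma rpartial_coord_DERIV: "line_diff g x \<Longrightarrow>
  DERIV (\<lambda>t. (x + t *\<^sub>R axis j 1) $ i * g (x + t *\<^sub>R axis j 1)) 0 :>
     (if i = j then g x else 0) + x $ i * rpartial j g x"
proof -
  assume "line_diff g x"
  show ?thesis
    by (rule DERIV_cong[OF DERIV_mult[OF line_coord_DERIV[of x j i] line_diff_DERIV[OF \<open>line_diff g x\<close>, of j]]])
       simp
qed

lemma line_diff_coord: assumes "line_diff g x" shows "line_diff (\<lambda>y. y $ i * g y) x"
  unfolding line_diff_def[of "\<lambda>y. y $ i * g y"]
proof
  fix j show "(\<lambda>t. (x + t *\<^sub>R axis j 1) $ i * g (x + t *\<^sub>R axis j 1)) differentiable at 0"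
    by (rule DERIV_imp_real_differentiable[OF rpartial_coord_DERIV[OF assms(1)]])
qed

lemma rpartial_coord: "line_diff g x \<Longrightarrow>
  rpartial j (\<lambda>y. y $ i * g y) x = (if i = j then g x else 0) + x $ i * rpartial j g x"
  by (rule rpartial_eqI) (rule rpartial_coord_DERIV)

lemma dist_two_axis_steps:
  fixes x :: "real ^ 'n::{finite,linorder}"
  assumes "0 \<le> s" "0 \<le> t"
  shows "dist (x + s *\<^sub>R axis a 1 + t *\<^sub>R axis b 1) x \<le> s + t"
proof -
  have "dist (x + s *\<^sub>R axis a 1 + t *\<^sub>R axis b 1) x = norm (s *\<^sub>R axis a 1 + t *\<^sub>R axis b (1::real))"
    by (simp add: dist_norm)
  also have "\<dots> \<le> norm (s *\<^sub>R axis a (1::real)) + norm (t *\<^sub>R axis b (1::real))"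
    by (rule norm_triangle_ineq)
  also have "\<dots> = s + t" using assms by simp
  finally show ?thesis .
qed

lemma line_DERIV:
  fixes g :: "real ^ 'n::{finite,linorder} \<Rightarrow> real"
  assumes "line_diff g (p + s *\<^sub>R axis a 1)"
  shows "DERIV (\<lambda>\<sigma>. g (p + \<sigma> *\<^sub>R axis a 1)) s :> rpartial a g (p + s *\<^sub>R axis a 1)"
proof -
  have D: "DERIV (\<lambda>t. g ((p + s *\<^sub>R axis a 1) + t *\<^sub>R axis a 1)) 0 :> rpartial a g (p + s *\<^sub>R axis a 1)"
    by (rule line_diff_DERIV[OF assms])
  have e: "(\<lambda>t. g ((p + s *\<^sub>R axis a 1) + t *\<^sub>R axis a 1)) = (\<lambda>t. g (p + (t + s) *\<^sub>R axis a 1))"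
    by (simp add: scaleR_add_left algebra_simps)
  from D[unfolded e] have "DERIV (\<lambda>\<sigma>. g (p + \<sigma> *\<^sub>R axis a 1)) (0 + s) :> rpartial a g (p + s *\<^sub>R axis a 1)"
    by (subst DERIV_shift) simp
  thus ?thesis by simp
qed

subsection \<open>The classes C^k\<close>

text \<open>The successor equation of Ck_real is used only through Ck_real_Suc, which phrases
  the differentiability requirement via line_diff.\<close>

declare Ck_real.simps(2)[simp del]

lemma Ck_real_Suc: "Ck_real (Suc k) \<Omega> g \<longleftrightarrow>
   continuous_on \<Omega> g \<and> (\<forall>x\<in>\<Omega>. line_diff g x) \<and> (\<forall>j. Ck_real k \<Omega> (rpartial j g))"
  by (simp add: line_diff_def Ck_real.simps(2))

lemma Ck_real_continuous: assumes "Ck_real k \<Omega> g" shows "continuous_on \<Omega> g"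
proof (cases k)
  case 0 then show ?thesis using assms by simp
next
  case (Suc n) then show ?thesis using assms by (simp add: Ck_real_Suc)
qed

lemma Ck_real_line_diff: "Ck_real (Suc k) \<Omega> g \<Longrightarrow> x \<in> \<Omega> \<Longrightarrow> line_diff g x"
  by (simp add: Ck_real_Suc)

lemma Ck_real_rpartial: "Ck_real (Suc k) \<Omega> g \<Longrightarrow> Ck_real k \<Omega> (rpartial j g)"
  by (simp add: Ck_real_Suc)

lemma Ck_real_mono: "Ck_real (Suc k) \<Omega> g \<Longrightarrow> Ck_real k \<Omega> g"
proof (induction k arbitrary: g)
  case 0 thus ?case using Ck_real_continuous by simp
next
  case (Suc k) thus ?case by (simp add: Ck_real_Suc)
qed

lemma Ck_line_diff: "Ck (Suc k) \<Omega> F \<Longrightarrow> x \<in> \<Omega> \<Longrightarrow> line_diff (\<lambda>y. F y A) x"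
  unfolding Ck_def using Ck_real_line_diff by blast

lemma Ck_mono: "Ck (Suc k) \<Omega> F \<Longrightarrow> Ck k \<Omega> F"
  unfolding Ck_def using Ck_real_mono by blast

lemma Ck_cpartial: "Ck (Suc k) \<Omega> F \<Longrightarrow> Ck k \<Omega> (cpartial j F)"
  unfolding Ck_def cpartial_def using Ck_real_rpartial by blast

lemma Ck2_imp_Ck1: "Ck 2 \<Omega> F \<Longrightarrow> Ck 1 \<Omega> F"
  using Ck_mono[of 1 \<Omega> F] by (simp add: eval_nat_numeral)

lemma Ck3_imp_Ck2: "Ck 3 \<Omega> F \<Longrightarrow> Ck 2 \<Omega> F"
  using Ck_mono[of 2 \<Omega> F] by (simp add: eval_nat_numeral)

lemma Ck4_imp_Ck3: "Ck 4 \<Omega> F \<Longrightarrow> Ck 3 \<Omega> F"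
  using Ck_mono[of 3 \<Omega> F] by (simp add: eval_nat_numeral)

lemma Ck2_cpartial: "Ck 2 \<Omega> F \<Longrightarrow> Ck 1 \<Omega> (cpartial j F)"
  using Ck_cpartial[of 1 \<Omega> F j] by (simp add: eval_nat_numeral)

definition vec_right_mult :: "real ^ 'n::{finite,linorder} \<Rightarrow> 'n clifford \<Rightarrow> 'n clifford" where
  "vec_right_mult y a = (\<Sum>k\<in>UNIV. cl_scale (y $ k) (a \<odot> cl_e k))"

definition vec_left_mult :: "real ^ 'n::{finite,linorder} \<Rightarrow> 'n clifford \<Rightarrow> 'n clifford" where
  "vec_left_mult y a = (\<Sum>k\<in>UNIV. cl_scale (y $ k) (cl_e k \<odot> a))"

lemma cl_vec_expand: "cl_vec y = (\<Sum>j\<in>UNIV. cl_scale (y $ j) (cl_e j))"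
  unfolding cl_vec_def cl_scale_def by simp

lemma cl_vec_right: "a \<odot> cl_vec y = vec_right_mult y a"
  unfolding cl_vec_expand vec_right_mult_def by (simp add: cl_mult_sum_right cl_mult_scale_right)

lemma cl_vec_left: "cl_vec y \<odot> a = vec_left_mult y a"
  unfolding cl_vec_expand vec_left_mult_def by (simp add: cl_mult_sum_left cl_mult_scale_left)

lemma additive_sum:
  fixes \<phi> :: "'n::{finite,linorder} clifford \<Rightarrow> 'n clifford"
  assumes add: "\<And>a b. \<phi> (a + b) = \<phi> a + \<phi> b" and z: "\<phi> 0 = 0"
  shows "\<phi> (\<Sum>i\<in>S. u i) = (\<Sum>i\<in>S. \<phi> (u i))"
proof (induction S rule: infinite_finite_induct)
  case (infinite A) thus ?case by (metis sum.infinite z)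
next
  case empty thus ?case by (metis sum.empty z)
next
  case (insert x F) thus ?case by (metis add sum.insert)
qed

lemma cl_scale_minus_one: "cl_scale (-1) a = - a" by (rule ext) simp

lemma cl_scale_two: "cl_scale 2 a = a + a" by (rule ext) simp

lemma vec_right_mult_add: "vec_right_mult y (a + b) = vec_right_mult y a + vec_right_mult y b"
  unfolding vec_right_mult_def by (simp add: cl_mult_add_left cl_scale_add sum.distrib)

lemma vec_right_mult_zero[simp]: "vec_right_mult y 0 = 0"
  unfolding vec_right_mult_def by simp

lemma vec_right_mult_scale: "vec_right_mult y (cl_scale c a) = cl_scale c (vec_right_mult y a)"
  unfolding vec_right_mult_def by (simp add: cl_mult_scale_left cl_scale_scale cl_scale_sum mult.commute)

lemma vec_right_mult_sum: "vec_right_mult y (\<Sum>i\<in>S. u i) = (\<Sum>i\<in>S. vec_right_mult y (u i))"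
  by (rule additive_sum) (rule vec_right_mult_add, rule vec_right_mult_zero)

lemma vec_left_mult_add: "vec_left_mult y (a + b) = vec_left_mult y a + vec_left_mult y b"
  unfolding vec_left_mult_def by (simp add: cl_mult_add_right cl_scale_add sum.distrib)

lemma vec_left_mult_zero[simp]: "vec_left_mult y 0 = 0"
  unfolding vec_left_mult_def by simp

lemma vec_left_mult_sum: "vec_left_mult y (\<Sum>i\<in>S. u i) = (\<Sum>i\<in>S. vec_left_mult y (u i))"
  by (rule additive_sum) (rule vec_left_mult_add, rule vec_left_mult_zero)

lemma sandwich_add: "sandwich (a + b) = sandwich a + sandwich b"
  unfolding sandwich_def by (simp add: cl_mult_add_left cl_mult_add_right sum.distrib)

lemma sandwich_zero[simp]: "sandwich 0 = 0"
  unfolding sandwich_def by simp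

lemma sandwich_scale: "sandwich (cl_scale c a) = cl_scale c (sandwich a)"
  unfolding sandwich_def by (simp add: cl_mult_scale_left cl_mult_scale_right cl_scale_sum)

lemma sandwich_uminus: "sandwich (- a) = - sandwich a"
  by (metis sandwich_scale cl_scale_minus_one)

lemma sandwich_sum: "sandwich (\<Sum>i\<in>S. u i) = (\<Sum>i\<in>S. sandwich (u i))"
  by (rule additive_sum) (rule sandwich_add, rule sandwich_zero)

lemma sum_if_eq_add: "(\<Sum>k\<in>UNIV. (if k = j then f k else 0) + g k) = f j + (\<Sum>k\<in>UNIV. g k)"
  for f g :: "'n::{finite,linorder} \<Rightarrow> 'n clifford"
  by (simp add: sum.distrib)

lemma sum_delta_fun: "(\<Sum>j\<in>UNIV. if i = j then f j else (0::'n::{finite,linorder} clifford)) = f i"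
  for f :: "'n::{finite,linorder} \<Rightarrow> 'n clifford"
  by (simp add: sum.delta')

lemma cl_half_eq: "S + S = cl_scale (-2) L \<Longrightarrow> S = - (L::'n::{finite,linorder} clifford)"
proof (rule ext)
  fix C assume "S + S = cl_scale (-2) L"
  hence "S C + S C = -2 * L C" by (metis plus_fun_apply cl_scale_apply)
  thus "S C = (- L) C" by (simp add: eval_nat_numeral)
qed

lemma cl_scale_neg_two_eq_0_iff: "cl_scale (-2) a = 0 \<longleftrightarrow> a = 0"
  by (auto simp: fun_eq_iff)

lemma cl_scale_four_eq_0_iff: "cl_scale 2 a + cl_scale 2 a = 0 \<longleftrightarrow> a = 0"
  by (auto simp: fun_eq_iff)

lemma cl_scale_eight_eq_0_iff:
  "cl_scale 2 (cl_scale 2 a) + cl_scale 2 (cl_scale 2 a) = 0 \<longleftrightarrow> a = 0"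
  by (auto simp: fun_eq_iff)

text \<open>Contracting a symmetric family b i j against e_i e_j (from either side) gives
  -\<Sum>i b i i: the antisymmetric part of e_i e_j cancels.\<close>

lemma symmetric_double_sum_left:
  fixes b :: "'n::{finite,linorder} \<Rightarrow> 'n \<Rightarrow> 'n clifford"
  assumes sym: "\<And>i j. b i j = b j i"
  shows "(\<Sum>i\<in>UNIV. \<Sum>j\<in>UNIV. cl_e i \<odot> (cl_e j \<odot> b i j)) = - (\<Sum>i\<in>UNIV. b i i)"
proof -
  let ?S = "\<Sum>i\<in>UNIV. \<Sum>j\<in>UNIV. cl_e i \<odot> (cl_e j \<odot> b i j)"
  have "?S = (\<Sum>j\<in>UNIV. \<Sum>i\<in>UNIV. cl_e i \<odot> (cl_e j \<odot> b i j))" by (rule sum.swap)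
  also have "\<dots> = (\<Sum>i\<in>UNIV. \<Sum>j\<in>UNIV. cl_e j \<odot> (cl_e i \<odot> b i j))"
    by (intro sum.cong refl) (simp add: sym)
  finally have swapped: "?S = \<dots>" .
  have "?S + ?S = (\<Sum>i\<in>UNIV. \<Sum>j\<in>UNIV. cl_e i \<odot> (cl_e j \<odot> b i j) + cl_e j \<odot> (cl_e i \<odot> b i j))"
    by (subst (2) swapped) (simp add: sum.distrib)
  also have "\<dots> = (\<Sum>i\<in>UNIV. \<Sum>j\<in>UNIV. if i = j then cl_scale (-2) (b i j) else 0)"
    by (intro sum.cong refl) (simp add: gen_anticommute_left)
  also have "\<dots> = cl_scale (-2) (\<Sum>i\<in>UNIV. b i i)"
    by (simp only: sum_delta_fun cl_scale_sum)
  finally show ?thesis by (rule cl_half_eq)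
qed

lemma symmetric_double_sum_right:
  fixes b :: "'n::{finite,linorder} \<Rightarrow> 'n \<Rightarrow> 'n clifford"
  assumes sym: "\<And>i j. b i j = b j i"
  shows "(\<Sum>i\<in>UNIV. \<Sum>j\<in>UNIV. (b i j \<odot> cl_e j) \<odot> cl_e i) = - (\<Sum>i\<in>UNIV. b i i)"
proof -
  let ?S = "\<Sum>i\<in>UNIV. \<Sum>j\<in>UNIV. (b i j \<odot> cl_e j) \<odot> cl_e i"
  have "?S = (\<Sum>j\<in>UNIV. \<Sum>i\<in>UNIV. (b i j \<odot> cl_e j) \<odot> cl_e i)" by (rule sum.swap)
  also have "\<dots> = (\<Sum>i\<in>UNIV. \<Sum>j\<in>UNIV. (b i j \<odot> cl_e i) \<odot> cl_e j)"
    by (intro sum.cong refl) (simp add: sym)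
  finally have swapped: "?S = \<dots>" .
  have "?S + ?S = (\<Sum>i\<in>UNIV. \<Sum>j\<in>UNIV. (b i j \<odot> cl_e j) \<odot> cl_e i + (b i j \<odot> cl_e i) \<odot> cl_e j)"
    by (subst (2) swapped) (simp add: sum.distrib)
  also have "\<dots> = (\<Sum>i\<in>UNIV. \<Sum>j\<in>UNIV. if i = j then cl_scale (-2) (b i j) else 0)"
    by (intro sum.cong refl) (simp add: gen_anticommute_right)
  also have "\<dots> = cl_scale (-2) (\<Sum>i\<in>UNIV. b i i)"
    by (simp only: sum_delta_fun cl_scale_sum)
  finally show ?thesis by (rule cl_half_eq)
qed

lemma gen_left_sandwich:
  "cl_e i \<odot> sandwich c + sandwich (cl_e i \<odot> c) = cl_scale (-2) (c \<odot> cl_e i)"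
proof -
  have "cl_e i \<odot> sandwich c + sandwich (cl_e i \<odot> c) =
      (\<Sum>j\<in>UNIV. (cl_e i \<odot> (cl_e j \<odot> c) + cl_e j \<odot> (cl_e i \<odot> c)) \<odot> cl_e j)"
    unfolding sandwich_def
    by (simp add: cl_mult_sum_right sum.distrib cl_mult_add_left gen_mult_assoc[symmetric])
  also have "\<dots> = (\<Sum>j\<in>UNIV. if i = j then cl_scale (-2) (c \<odot> cl_e j) else 0)"
    by (intro sum.cong refl) (simp add: gen_anticommute_left cl_mult_scale_left)
  also have "\<dots> = cl_scale (-2) (c \<odot> cl_e i)"
    by (rule sum_delta_fun)
  finally show ?thesis .
qed

lemma gen_right_sandwich:
  "sandwich c \<odot> cl_e i + sandwich (c \<odot> cl_e i) = cl_scale (-2) (cl_e i \<odot> c)"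
proof -
  have "sandwich c \<odot> cl_e i + sandwich (c \<odot> cl_e i) =
      (\<Sum>j\<in>UNIV. ((cl_e j \<odot> c) \<odot> cl_e j) \<odot> cl_e i + ((cl_e j \<odot> c) \<odot> cl_e i) \<odot> cl_e j)"
    unfolding sandwich_def
    by (simp add: cl_mult_sum_left sum.distrib gen_mult_assoc[symmetric])
  also have "\<dots> = (\<Sum>j\<in>UNIV. if i = j then cl_scale (-2) (cl_e j \<odot> c) else 0)"
    by (intro sum.cong refl) (simp add: gen_anticommute_right eq_commute)
  also have "\<dots> = cl_scale (-2) (cl_e i \<odot> c)"
    by (rule sum_delta_fun)
  finally show ?thesis .
qed

lemma dirac_l_eq: "dirac_l F = (\<lambda>x. \<Sum>j\<in>UNIV. cl_e j \<odot> cpartial j F x)"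
  by (rule ext) (simp add: dirac_l_def)

lemma dirac_r_eq: "dirac_r F = (\<lambda>x. \<Sum>j\<in>UNIV. cpartial j F x \<odot> cl_e j)"
  by (rule ext) (simp add: dirac_r_def)

lemma laplace_eq: "laplace F = (\<lambda>x. \<Sum>j\<in>UNIV. cpartial j (cpartial j F) x)"
  by (rule ext) (simp add: laplace_def)

context
  fixes \<Omega> :: "(real ^ 'n::{finite,linorder}) set"
  assumes Omega_open: "open \<Omega>"
begin

lemma eventually_line_in:
  assumes "x \<in> \<Omega>"
  shows "eventually (\<lambda>t. x + t *\<^sub>R axis j (1::real) \<in> \<Omega>) (nhds 0)"
proof -
  obtain e where e: "e > 0" "ball x e \<subseteq> \<Omega>" using Omega_open assms by (meson open_contains_ball)
  show ?thesis unfolding eventually_nhds_metric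
  proof (intro exI[of _ e] conjI allI impI)
    fix t :: real assume "dist t 0 < e"
    hence "dist x (x + t *\<^sub>R axis j 1) < e" by (simp add: dist_norm)
    thus "x + t *\<^sub>R axis j 1 \<in> \<Omega>" using e by auto
  qed (use e in auto)
qed

lemma rpartial_local:
  fixes g h :: "real ^ 'n::{finite,linorder} \<Rightarrow> real"
  assumes "\<forall>y\<in>\<Omega>. g y = h y" "x \<in> \<Omega>"
  shows "rpartial j g x = rpartial j h x"
proof -
  have "eventually (\<lambda>t. g (x + t *\<^sub>R axis j 1) = h (x + t *\<^sub>R axis j 1)) (nhds 0)"
    by (rule eventually_mono[OF eventually_line_in[OF assms(2), of j]]) (use assms(1) in blast)
  thus ?thesis unfolding rpartial_def by (rule deriv_cong_ev) simp
qed

lemma line_differentiable_local: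
  fixes g h :: "real ^ 'n::{finite,linorder} \<Rightarrow> real"
  assumes "\<forall>y\<in>\<Omega>. g y = h y" "x \<in> \<Omega>"
    and "(\<lambda>t. g (x + t *\<^sub>R axis j 1)) differentiable (at 0)"
  shows "(\<lambda>t. h (x + t *\<^sub>R axis j 1)) differentiable (at 0)"
proof -
  have D: "DERIV (\<lambda>t. g (x + t *\<^sub>R axis j 1)) 0 :> rpartial j g x" by (rule rpartial_DERIV[OF assms(3)])
  have ev: "eventually (\<lambda>t. g (x + t *\<^sub>R axis j 1) = h (x + t *\<^sub>R axis j 1)) (nhds 0)"
    by (rule eventually_mono[OF eventually_line_in[OF assms(2), of j]]) (use assms(1) in blast)
  show ?thesis by (rule DERIV_imp_real_differentiable[OF iffD1[OF DERIV_cong_ev[OF refl ev refl] D]])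
qed

lemma Ck_real_cong: "Ck_real k \<Omega> g \<Longrightarrow> \<forall>y\<in>\<Omega>. g y = h y \<Longrightarrow> Ck_real k \<Omega> h"
proof (induction k arbitrary: g h)
  case 0 thus ?case using continuous_on_cong by (metis Ck_real.simps(1))
next
  case (Suc k)
  have c: "continuous_on \<Omega> h" using Suc.prems continuous_on_cong by (metis Ck_real_continuous)
  have l: "\<forall>x\<in>\<Omega>. line_diff h x"
    using Suc.prems line_differentiable_local unfolding Ck_real_Suc line_diff_def by blast
  have p: "Ck_real k \<Omega> (rpartial j h)" for j
    using Suc.IH[of "rpartial j g" "rpartial j h"] Suc.prems rpartial_local[of g h] unfolding Ck_real_Suc
    by blast
  show ?case using c l p by (simp add: Ck_real_Suc)
qed

lemma Ck_real_add: "Ck_real k \<Omega> g \<Longrightarrow> Ck_real k \<Omega> h \<Longrightarrow> Ck_real k \<Omega> (\<lambda>y. g y + h y)"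
proof (induction k arbitrary: g h)
  case 0 thus ?case by (simp add: continuous_on_add)
next
  case (Suc k)
  have c: "continuous_on \<Omega> (\<lambda>y. g y + h y)"
    by (rule continuous_on_add[OF Ck_real_continuous[OF Suc.prems(1)] Ck_real_continuous[OF Suc.prems(2)]])
  have l: "\<forall>x\<in>\<Omega>. line_diff (\<lambda>y. g y + h y) x" using Suc.prems by (simp add: Ck_real_Suc line_diff_add)
  have p: "Ck_real k \<Omega> (rpartial j (\<lambda>y. g y + h y))" for j
  proof (rule Ck_real_cong)
    show "Ck_real k \<Omega> (\<lambda>y. rpartial j g y + rpartial j h y)"
      using Suc.IH Suc.prems by (simp add: Ck_real_Suc)
    show "\<forall>y\<in>\<Omega>. rpartial j g y + rpartial j h y = rpartial j (\<lambda>y. g y + h y) y"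
      using Suc.prems by (simp add: Ck_real_Suc rpartial_add)
  qed
  show ?case using c l p by (simp add: Ck_real_Suc)
qed

lemma Ck_real_cmult: "Ck_real k \<Omega> g \<Longrightarrow> Ck_real k \<Omega> (\<lambda>y. c * g y)"
proof (induction k arbitrary: g)
  case 0 thus ?case by (simp add: continuous_on_mult_left)
next
  case (Suc k)
  have c: "continuous_on \<Omega> (\<lambda>y. c * g y)"
    by (rule continuous_on_mult_left[OF Ck_real_continuous[OF Suc.prems]])
  have l: "\<forall>x\<in>\<Omega>. line_diff (\<lambda>y. c * g y) x" using Suc.prems by (simp add: Ck_real_Suc line_diff_cmult)
  have p: "Ck_real k \<Omega> (rpartial j (\<lambda>y. c * g y))" for j
  proof (rule Ck_real_cong)
    show "Ck_real k \<Omega> (\<lambda>y. c * rpartial j g y)"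
      using Suc.IH Suc.prems by (simp add: Ck_real_Suc)
    show "\<forall>y\<in>\<Omega>. c * rpartial j g y = rpartial j (\<lambda>y. c * g y) y"
      using Suc.prems by (simp add: Ck_real_Suc rpartial_cmult)
  qed
  show ?case using c l p by (simp add: Ck_real_Suc)
qed

lemma Ck_real_const: "Ck_real k \<Omega> (\<lambda>y. c)"
proof (induction k arbitrary: c)
  case 0 thus ?case by simp
next
  case (Suc k)
  have e: "rpartial j (\<lambda>y. c) = (\<lambda>y. 0)" for j by (rule ext) (simp add: rpartial_const)
  have "\<forall>j. Ck_real k \<Omega> (rpartial j (\<lambda>y. c))" unfolding e by (simp add: Suc.IH)
  thus ?case by (simp add: Ck_real_Suc line_diff_const)
qed

lemma Ck_real_coord: "Ck_real k \<Omega> g \<Longrightarrow> Ck_real k \<Omega> (\<lambda>y. y $ i * g y)"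
proof (induction k arbitrary: g)
  case 0 thus ?case by (auto intro!: continuous_intros)
next
  case (Suc k)
  have c: "continuous_on \<Omega> (\<lambda>y. y $ i * g y)"
    using Ck_real_continuous[OF Suc.prems] by (intro continuous_intros)
  have l: "\<forall>x\<in>\<Omega>. line_diff (\<lambda>y. y $ i * g y) x" using Suc.prems by (simp add: Ck_real_Suc line_diff_coord)
  have p: "Ck_real k \<Omega> (rpartial j (\<lambda>y. y $ i * g y))" for j
  proof (rule Ck_real_cong)
    show "Ck_real k \<Omega> (\<lambda>y. (if i = j then g y else 0) + y $ i * rpartial j g y)"
    proof (rule Ck_real_add)
      show "Ck_real k \<Omega> (\<lambda>y. if i = j then g y else 0)"
        using Ck_real_mono[OF Suc.prems] Ck_real_const by (cases "i = j") auto
      show "Ck_real k \<Omega> (\<lambda>y. y $ i * rpartial j g y)"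
        using Suc.IH Suc.prems by (simp add: Ck_real_Suc)
    qed
    show "\<forall>y\<in>\<Omega>. (if i = j then g y else 0) + y $ i * rpartial j g y = rpartial j (\<lambda>y. y $ i * g y) y"
      using Suc.prems by (simp add: Ck_real_Suc rpartial_coord)
  qed
  show ?case using c l p by (simp add: Ck_real_Suc)
qed

lemma Ck_add: "Ck k \<Omega> F \<Longrightarrow> Ck k \<Omega> G \<Longrightarrow> Ck k \<Omega> (\<lambda>y. F y + G y)"
  unfolding Ck_def using Ck_real_add by simp

lemma Ck_scale: "Ck k \<Omega> F \<Longrightarrow> Ck k \<Omega> (\<lambda>y. cl_scale c (F y))"
  unfolding Ck_def using Ck_real_cmult by simp

lemma Ck_sum: "finite S \<Longrightarrow> (\<And>i. i \<in> S \<Longrightarrow> Ck k \<Omega> (F i)) \<Longrightarrow> Ck k \<Omega> (\<lambda>y. \<Sum>i\<in>S. F i y)"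
proof (induction S rule: finite_induct)
  case empty then show ?case by (simp add: Ck_def Ck_real_const)
next
  case (insert a S')
  have "Ck k \<Omega> (\<lambda>y. F a y + (\<Sum>i\<in>S'. F i y))" by (rule Ck_add) (use insert in auto)
  thus ?case by (simp only: sum.insert[OF insert.hyps(1,2)])
qed

lemma Ck_coord: "Ck k \<Omega> F \<Longrightarrow> Ck k \<Omega> (\<lambda>y. cl_scale (y $ i) (F y))"
  unfolding Ck_def using Ck_real_coord by simp

lemma Ck_gen_left: "Ck k \<Omega> F \<Longrightarrow> Ck k \<Omega> (\<lambda>y. cl_e i \<odot> F y)"
  unfolding Ck_def gen_mult_left_apply
proof
  fix A assume "\<forall>A. Ck_real k \<Omega> (\<lambda>x. F x A)"
  thus "Ck_real k \<Omega> (\<lambda>x. blade_sign {i} (toggle i A) * F x (toggle i A))" by (intro Ck_real_cmult) simp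
qed

lemma Ck_gen_right: "Ck k \<Omega> F \<Longrightarrow> Ck k \<Omega> (\<lambda>y. F y \<odot> cl_e i)"
  unfolding Ck_def gen_mult_right_apply
proof
  fix A assume "\<forall>A. Ck_real k \<Omega> (\<lambda>x. F x A)"
  thus "Ck_real k \<Omega> (\<lambda>x. blade_sign (toggle i A) {i} * F x (toggle i A))" by (intro Ck_real_cmult) simp
qed

lemma Ck_dirac_l: "Ck (Suc k) \<Omega> F \<Longrightarrow> Ck k \<Omega> (dirac_l F)"
  unfolding dirac_l_eq by (intro Ck_sum Ck_gen_left Ck_cpartial) auto

lemma Ck_dirac_r: "Ck (Suc k) \<Omega> F \<Longrightarrow> Ck k \<Omega> (dirac_r F)"
  unfolding dirac_r_eq by (intro Ck_sum Ck_gen_right Ck_cpartial) auto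

lemma Ck_laplace: "Ck (Suc (Suc k)) \<Omega> F \<Longrightarrow> Ck k \<Omega> (laplace F)"
  unfolding laplace_eq by (intro Ck_sum Ck_cpartial) auto

lemma Ck_sandwich: "Ck k \<Omega> F \<Longrightarrow> Ck k \<Omega> (\<lambda>y. sandwich (F y))"
  unfolding sandwich_def by (intro Ck_sum Ck_gen_right Ck_gen_left) auto

lemma Ck_vec_right_mult: "Ck k \<Omega> F \<Longrightarrow> Ck k \<Omega> (\<lambda>y. vec_right_mult y (F y))"
  unfolding vec_right_mult_def by (intro Ck_sum Ck_coord Ck_gen_right) auto

lemma Ck_vec_left_mult: "Ck k \<Omega> F \<Longrightarrow> Ck k \<Omega> (\<lambda>y. vec_left_mult y (F y))"
  unfolding vec_left_mult_def by (intro Ck_sum Ck_coord Ck_gen_left) auto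

subsection \<open>Symmetry of second derivatives\<close>

text \<open>A mixed second difference equals h^2 times a mixed second partial derivative at a
  nearby point (mean value theorem applied twice).\<close>

lemma mixed_difference_mvt:
  fixes g :: "real ^ 'n::{finite,linorder} \<Rightarrow> real"
  assumes g2: "Ck_real 2 \<Omega> g" and ball: "ball x e \<subseteq> \<Omega>" and h: "0 < h" "2 * h < e"
  shows "\<exists>\<xi>. dist \<xi> x < 2 * h \<and>
    g (x + h *\<^sub>R axis a 1 + h *\<^sub>R axis b 1) - g (x + h *\<^sub>R axis a 1) - g (x + h *\<^sub>R axis b 1) + g x
      = h * h * rpartial b (rpartial a g) \<xi>"
proof -
  let ?u = "axis a (1::real) :: real ^ 'n::{finite,linorder}" and ?v = "axis b (1::real) :: real ^ 'n::{finite,linorder}"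
  have inO: "x + s *\<^sub>R ?u + t *\<^sub>R ?v \<in> \<Omega>" if "0 \<le> s" "s \<le> h" "0 \<le> t" "t \<le> h" for s t
    using dist_two_axis_steps[of s t x a b] that h ball by (auto simp: dist_commute)
  have g1: "\<forall>y\<in>\<Omega>. line_diff g y" using g2 by (simp add: Ck_real_Suc numeral_2_eq_2)
  have pa: "Ck_real 1 \<Omega> (rpartial a g)" using g2 by (simp add: Ck_real_Suc numeral_2_eq_2)
  hence pa1: "\<forall>y\<in>\<Omega>. line_diff (rpartial a g) y" by (simp add: Ck_real_Suc)
  define \<phi> where "\<phi> = (\<lambda>\<sigma>. g (x + h *\<^sub>R ?v + \<sigma> *\<^sub>R ?u) - g (x + \<sigma> *\<^sub>R ?u))"
  have "\<exists>z>0. z < h \<and> \<phi> h - \<phi> 0 = (h - 0) *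
      (rpartial a g (x + h *\<^sub>R ?v + z *\<^sub>R ?u) - rpartial a g (x + z *\<^sub>R ?u))"
  proof (rule MVT2[OF h(1)])
    fix s :: real assume s: "0 \<le> s" "s \<le> h"
    have l1: "line_diff g (x + h *\<^sub>R ?v + s *\<^sub>R ?u)"
      using g1 inO[OF s, of h] h by (simp add: algebra_simps)
    have l2: "line_diff g (x + s *\<^sub>R ?u)" using g1 inO[OF s, of 0] h by simp
    show "DERIV \<phi> s :> rpartial a g (x + h *\<^sub>R ?v + s *\<^sub>R ?u) - rpartial a g (x + s *\<^sub>R ?u)"
      unfolding \<phi>_def by (intro DERIV_diff line_DERIV l1 l2)
  qed
  then obtain s where s: "0 < s" "s < h"
    and es: "\<phi> h - \<phi> 0 = h * (rpartial a g (x + s *\<^sub>R ?u + h *\<^sub>R ?v) - rpartial a g (x + s *\<^sub>R ?u))"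
    by (auto simp: algebra_simps)
  define \<psi> where "\<psi> = (\<lambda>\<tau>. rpartial a g (x + s *\<^sub>R ?u + \<tau> *\<^sub>R ?v))"
  have "\<exists>z>0. z < h \<and> \<psi> h - \<psi> 0 = (h - 0) * rpartial b (rpartial a g) (x + s *\<^sub>R ?u + z *\<^sub>R ?v)"
  proof (rule MVT2[OF h(1)])
    fix t :: real assume t: "0 \<le> t" "t \<le> h"
    have l: "line_diff (rpartial a g) (x + s *\<^sub>R ?u + t *\<^sub>R ?v)"
      using pa1 inO[of s t] s t by simp
    show "DERIV \<psi> t :> rpartial b (rpartial a g) (x + s *\<^sub>R ?u + t *\<^sub>R ?v)"
      unfolding \<psi>_def by (rule line_DERIV[OF l])
  qed
  then obtain t where t: "0 < t" "t < h"
    and et: "\<psi> h - \<psi> 0 = h * rpartial b (rpartial a g) (x + s *\<^sub>R ?u + t *\<^sub>R ?v)"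
    by auto
  have d: "dist (x + s *\<^sub>R ?u + t *\<^sub>R ?v) x < 2 * h"
    using dist_two_axis_steps[of s t x a b] s t by simp
  have "g (x + h *\<^sub>R ?u + h *\<^sub>R ?v) - g (x + h *\<^sub>R ?u) - g (x + h *\<^sub>R ?v) + g x = \<phi> h - \<phi> 0"
    unfolding \<phi>_def by (simp add: algebra_simps)
  also have "\<dots> = h * (\<psi> h - \<psi> 0)" unfolding es \<psi>_def by simp
  also have "\<dots> = h * h * rpartial b (rpartial a g) (x + s *\<^sub>R ?u + t *\<^sub>R ?v)"
    unfolding et by simp
  finally show ?thesis using d by blast
qed

text \<open>Schwarz: comparing the two orders of differencing and letting h \<rightarrow> 0 with
  continuity of the second partials.\<close>

lemma schwarz:
  fixes g :: "real ^ 'n::{finite,linorder} \<Rightarrow> real"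
  assumes g2: "Ck_real 2 \<Omega> g" and x: "x \<in> \<Omega>"
  shows "rpartial i (rpartial j g) x = rpartial j (rpartial i g) x"
proof (rule ccontr)
  let ?A = "rpartial j (rpartial i g)" and ?B = "rpartial i (rpartial j g)"
  assume ne: "?B x \<noteq> ?A x"
  define \<epsilon> where "\<epsilon> = \<bar>?A x - ?B x\<bar> / 2"
  have \<epsilon>: "\<epsilon> > 0" using ne by (simp add: \<epsilon>_def)
  have cA: "continuous_on \<Omega> ?A" and cB: "continuous_on \<Omega> ?B"
    using g2 by (auto simp: Ck_real_Suc numeral_2_eq_2 intro: Ck_real_continuous)
  have "isCont ?A x" using cA Omega_open x continuous_on_eq_continuous_at by blast
  then obtain dA where dA: "dA > 0" "\<And>y. dist y x < dA \<Longrightarrow> dist (?A y) (?A x) < \<epsilon>"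
    using \<epsilon> unfolding continuous_at_eps_delta by blast
  have "isCont ?B x" using cB Omega_open x continuous_on_eq_continuous_at by blast
  then obtain dB where dB: "dB > 0" "\<And>y. dist y x < dB \<Longrightarrow> dist (?B y) (?B x) < \<epsilon>"
    using \<epsilon> unfolding continuous_at_eps_delta by blast
  obtain e where e: "e > 0" "ball x e \<subseteq> \<Omega>" using Omega_open x by (meson open_contains_ball)
  define h where "h = min e (min dA dB) / 4"
  have h: "0 < h" "2 * h < e" "2 * h < dA" "2 * h < dB" using e dA dB by (auto simp: h_def)
  obtain \<xi>1 where \<xi>1: "dist \<xi>1 x < 2 * h" and E1:
    "g (x + h *\<^sub>R axis i 1 + h *\<^sub>R axis j 1) - g (x + h *\<^sub>R axis i 1) - g (x + h *\<^sub>R axis j 1) + g x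
      = h * h * ?A \<xi>1"
    using mixed_difference_mvt[OF g2 e(2) h(1,2), of i j] by blast
  obtain \<xi>2 where \<xi>2: "dist \<xi>2 x < 2 * h" and E2:
    "g (x + h *\<^sub>R axis j 1 + h *\<^sub>R axis i 1) - g (x + h *\<^sub>R axis j 1) - g (x + h *\<^sub>R axis i 1) + g x
      = h * h * ?B \<xi>2"
    using mixed_difference_mvt[OF g2 e(2) h(1,2), of j i] by blast
  have "h * h * ?A \<xi>1 = h * h * ?B \<xi>2" using E1 E2 by (simp add: algebra_simps)
  hence eq: "?A \<xi>1 = ?B \<xi>2" using h(1) by simp
  have "dist (?A \<xi>1) (?A x) < \<epsilon>" using dA(2) \<xi>1 h by simp
  moreover have "dist (?B \<xi>2) (?B x) < \<epsilon>" using dB(2) \<xi>2 h by simp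
  ultimately have "\<bar>?A x - ?B x\<bar> < 2 * \<epsilon>" using eq by (simp add: dist_real_def)
  thus False by (simp add: \<epsilon>_def)
qed

lemma cpartial_commute: "Ck 2 \<Omega> F \<Longrightarrow> x \<in> \<Omega> \<Longrightarrow>
   cpartial i (cpartial j F) x = cpartial j (cpartial i F) x"
proof (rule ext)
  fix A assume "Ck 2 \<Omega> F" "x \<in> \<Omega>"
  hence "Ck_real 2 \<Omega> (\<lambda>y. F y A)" by (simp add: Ck_def)
  from schwarz[OF this \<open>x \<in> \<Omega>\<close>, of i j]
  show "cpartial i (cpartial j F) x A = cpartial j (cpartial i F) x A"
    by (simp add: cpartial_def)
qed

lemma cpartial_local: "\<forall>y\<in>\<Omega>. F y = G y \<Longrightarrow> x \<in> \<Omega> \<Longrightarrow> cpartial j F x = cpartial j G x"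
proof (rule ext)
  fix A assume "\<forall>y\<in>\<Omega>. F y = G y" "x \<in> \<Omega>"
  thus "cpartial j F x A = cpartial j G x A" unfolding cpartial_def
    by (intro rpartial_local) auto
qed

lemma cpartial_zero: "\<forall>y\<in>\<Omega>. F y = 0 \<Longrightarrow> x \<in> \<Omega> \<Longrightarrow> cpartial j F x = 0"
proof -
  assume "\<forall>y\<in>\<Omega>. F y = 0" "x \<in> \<Omega>"
  hence "cpartial j F x = cpartial j (\<lambda>y. 0) x" by (intro cpartial_local) auto
  also have "\<dots> = 0" by (rule ext) (simp add: cpartial_def rpartial_const)
  finally show ?thesis .
qed

lemma cpartial_add: "Ck 1 \<Omega> F \<Longrightarrow> Ck 1 \<Omega> G \<Longrightarrow> x \<in> \<Omega> \<Longrightarrow>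
   cpartial j (\<lambda>y. F y + G y) x = cpartial j F x + cpartial j G x"
  by (rule ext) (simp add: cpartial_def rpartial_add Ck_line_diff[where k=0, simplified])

lemma cpartial_scale: "Ck 1 \<Omega> F \<Longrightarrow> x \<in> \<Omega> \<Longrightarrow>
   cpartial j (\<lambda>y. cl_scale c (F y)) x = cl_scale c (cpartial j F x)"
  by (rule ext) (simp add: cpartial_def rpartial_cmult Ck_line_diff[where k=0, simplified])

lemma cpartial_uminus: "Ck 1 \<Omega> F \<Longrightarrow> x \<in> \<Omega> \<Longrightarrow>
   cpartial j (\<lambda>y. - F y) x = - cpartial j F x"
proof -
  assume a: "Ck 1 \<Omega> F" "x \<in> \<Omega>"
  have e: "(\<lambda>y. - F y) = (\<lambda>y. cl_scale (-1) (F y))" by (rule ext, rule ext) simp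
  show ?thesis unfolding e cpartial_scale[OF a] by (rule ext) simp
qed

lemma cpartial_sum: "finite S \<Longrightarrow> (\<And>i. i \<in> S \<Longrightarrow> Ck 1 \<Omega> (F i)) \<Longrightarrow> x \<in> \<Omega> \<Longrightarrow>
   cpartial j (\<lambda>y. \<Sum>i\<in>S. F i y) x = (\<Sum>i\<in>S. cpartial j (F i) x)"
proof (rule ext)
  fix A assume a: "finite S" "\<And>i. i \<in> S \<Longrightarrow> Ck 1 \<Omega> (F i)" "x \<in> \<Omega>"
  have "rpartial j (\<lambda>y. \<Sum>i\<in>S. F i y A) x = (\<Sum>i\<in>S. rpartial j (\<lambda>y. F i y A) x)"
    by (rule rpartial_sum[OF a(1)]) (use a in \<open>auto intro: Ck_line_diff[where k=0, simplified]\<close>)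
  thus "cpartial j (\<lambda>y. \<Sum>i\<in>S. F i y) x A = (\<Sum>i\<in>S. cpartial j (F i) x) A"
    by (simp add: cpartial_def sum_fun_apply)
qed

lemma cpartial_coord: "Ck 1 \<Omega> F \<Longrightarrow> x \<in> \<Omega> \<Longrightarrow>
   cpartial j (\<lambda>y. cl_scale (y $ i) (F y)) x = (if i = j then F x else 0) + cl_scale (x $ i) (cpartial j F x)"
  by (rule ext) (simp add: cpartial_def rpartial_coord Ck_line_diff[where k=0, simplified])

lemma cpartial_gen_left: "Ck 1 \<Omega> F \<Longrightarrow> x \<in> \<Omega> \<Longrightarrow>
   cpartial j (\<lambda>y. cl_e i \<odot> F y) x = cl_e i \<odot> cpartial j F x"
  by (rule ext) (simp add: cpartial_def gen_mult_left_apply rpartial_cmult Ck_line_diff[where k=0, simplified])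

lemma cpartial_gen_right: "Ck 1 \<Omega> F \<Longrightarrow> x \<in> \<Omega> \<Longrightarrow>
   cpartial j (\<lambda>y. F y \<odot> cl_e i) x = cpartial j F x \<odot> cl_e i"
  by (rule ext) (simp add: cpartial_def gen_mult_right_apply rpartial_cmult Ck_line_diff[where k=0, simplified])

lemma cpartial_vec_right_mult:
  assumes a: "Ck 1 \<Omega> H" "x \<in> \<Omega>"
  shows "cpartial j (\<lambda>y. vec_right_mult y (H y)) x = H x \<odot> cl_e j + vec_right_mult x (cpartial j H x)"
proof -
  have "cpartial j (\<lambda>y. vec_right_mult y (H y)) x = (\<Sum>k\<in>UNIV. cpartial j (\<lambda>y. cl_scale (y$k) (H y \<odot> cl_e k)) x)"
    unfolding vec_right_mult_def by (rule cpartial_sum, simp, rule Ck_coord, rule Ck_gen_right, rule a, rule a)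
  also have "\<dots> = (\<Sum>k\<in>UNIV. (if k = j then H x \<odot> cl_e k else 0)
      + cl_scale (x$k) (cpartial j H x \<odot> cl_e k))"
    by (intro sum.cong refl)
      (simp only: cpartial_coord[OF Ck_gen_right[OF a(1)] a(2)] cpartial_gen_right[OF a])
  also have "\<dots> = H x \<odot> cl_e j + vec_right_mult x (cpartial j H x)"
    unfolding vec_right_mult_def by (rule sum_if_eq_add)
  finally show ?thesis .
qed

lemma cpartial_vec_left_mult:
  assumes a: "Ck 1 \<Omega> H" "x \<in> \<Omega>"
  shows "cpartial j (\<lambda>y. vec_left_mult y (H y)) x = cl_e j \<odot> H x + vec_left_mult x (cpartial j H x)"
proof -
  have "cpartial j (\<lambda>y. vec_left_mult y (H y)) x = (\<Sum>k\<in>UNIV. cpartial j (\<lambda>y. cl_scale (y$k) (cl_e k \<odot> H y)) x)"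
    unfolding vec_left_mult_def by (rule cpartial_sum, simp, rule Ck_coord, rule Ck_gen_left, rule a, rule a)
  also have "\<dots> = (\<Sum>k\<in>UNIV. (if k = j then cl_e k \<odot> H x else 0)
      + cl_scale (x$k) (cl_e k \<odot> cpartial j H x))"
    by (intro sum.cong refl)
      (simp only: cpartial_coord[OF Ck_gen_left[OF a(1)] a(2)] cpartial_gen_left[OF a])
  also have "\<dots> = cl_e j \<odot> H x + vec_left_mult x (cpartial j H x)"
    unfolding vec_left_mult_def by (rule sum_if_eq_add)
  finally show ?thesis .
qed

lemma cpartial_sandwich:
  assumes a: "Ck 1 \<Omega> F" "x \<in> \<Omega>"
  shows "cpartial j (\<lambda>y. sandwich (F y)) x = sandwich (cpartial j F x)"
proof -
  have "cpartial j (\<lambda>y. sandwich (F y)) x = (\<Sum>k\<in>UNIV. cpartial j (\<lambda>y. cl_e k \<odot> F y \<odot> cl_e k) x)"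
    unfolding sandwich_def by (rule cpartial_sum, simp, rule Ck_gen_right, rule Ck_gen_left, rule a, rule a)
  also have "\<dots> = (\<Sum>k\<in>UNIV. cl_e k \<odot> cpartial j F x \<odot> cl_e k)"
    by (intro sum.cong refl)
      (simp only: cpartial_gen_right[OF Ck_gen_left[OF a(1)] a(2)] cpartial_gen_left[OF a])
  finally show ?thesis unfolding sandwich_def .
qed

lemma dirac_l_local: "\<forall>y\<in>\<Omega>. F y = G y \<Longrightarrow> x \<in> \<Omega> \<Longrightarrow> dirac_l F x = dirac_l G x"
proof -
  assume a: "\<forall>y\<in>\<Omega>. F y = G y" "x \<in> \<Omega>"
  hence "\<forall>j. cpartial j F x = cpartial j G x" using cpartial_local by blast
  thus ?thesis unfolding dirac_l_def by simp
qed

lemma dirac_r_local: "\<forall>y\<in>\<Omega>. F y = G y \<Longrightarrow> x \<in> \<Omega> \<Longrightarrow> dirac_r F x = dirac_r G x"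
proof -
  assume a: "\<forall>y\<in>\<Omega>. F y = G y" "x \<in> \<Omega>"
  hence "\<forall>j. cpartial j F x = cpartial j G x" using cpartial_local by blast
  thus ?thesis unfolding dirac_r_def by simp
qed

lemma laplace_local: "\<forall>y\<in>\<Omega>. F y = G y \<Longrightarrow> x \<in> \<Omega> \<Longrightarrow> laplace F x = laplace G x"
proof -
  assume a: "\<forall>y\<in>\<Omega>. F y = G y" "x \<in> \<Omega>"
  have "\<forall>y\<in>\<Omega>. cpartial j F y = cpartial j G y" for j using a cpartial_local by blast
  hence "\<forall>j. cpartial j (cpartial j F) x = cpartial j (cpartial j G) x" using cpartial_local a(2) by blast
  thus ?thesis unfolding laplace_def by simp
qed

lemma dirac_l_zero: "\<forall>y\<in>\<Omega>. F y = 0 \<Longrightarrow> x \<in> \<Omega> \<Longrightarrow> dirac_l F x = 0"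
proof -
  assume a: "\<forall>y\<in>\<Omega>. F y = 0" "x \<in> \<Omega>"
  hence "\<forall>j. cpartial j F x = 0" using cpartial_zero by blast
  thus ?thesis unfolding dirac_l_def by simp
qed

lemma dirac_r_zero: "\<forall>y\<in>\<Omega>. F y = 0 \<Longrightarrow> x \<in> \<Omega> \<Longrightarrow> dirac_r F x = 0"
proof -
  assume a: "\<forall>y\<in>\<Omega>. F y = 0" "x \<in> \<Omega>"
  hence "\<forall>j. cpartial j F x = 0" using cpartial_zero by blast
  thus ?thesis unfolding dirac_r_def by simp
qed

lemma laplace_zero: "\<forall>y\<in>\<Omega>. F y = 0 \<Longrightarrow> x \<in> \<Omega> \<Longrightarrow> laplace F x = 0"
proof -
  assume a: "\<forall>y\<in>\<Omega>. F y = 0" "x \<in> \<Omega>"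
  have "\<forall>y\<in>\<Omega>. cpartial j F y = 0" for j using a cpartial_zero by blast
  hence "\<forall>j. cpartial j (cpartial j F) x = 0" using cpartial_zero a(2) by blast
  thus ?thesis unfolding laplace_def by simp
qed

lemma dirac_l_add: "Ck 1 \<Omega> F \<Longrightarrow> Ck 1 \<Omega> G \<Longrightarrow> x \<in> \<Omega> \<Longrightarrow>
  dirac_l (\<lambda>y. F y + G y) x = dirac_l F x + dirac_l G x"
  unfolding dirac_l_def by (simp add: cpartial_add cl_mult_add_right sum.distrib)

lemma dirac_r_add: "Ck 1 \<Omega> F \<Longrightarrow> Ck 1 \<Omega> G \<Longrightarrow> x \<in> \<Omega> \<Longrightarrow>
  dirac_r (\<lambda>y. F y + G y) x = dirac_r F x + dirac_r G x"
  unfolding dirac_r_def by (simp add: cpartial_add cl_mult_add_left sum.distrib)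

lemma dirac_l_scale: "Ck 1 \<Omega> F \<Longrightarrow> x \<in> \<Omega> \<Longrightarrow> dirac_l (\<lambda>y. cl_scale c (F y)) x = cl_scale c (dirac_l F x)"
  unfolding dirac_l_def by (simp add: cpartial_scale cl_mult_scale_right cl_scale_sum)

lemma dirac_r_scale: "Ck 1 \<Omega> F \<Longrightarrow> x \<in> \<Omega> \<Longrightarrow> dirac_r (\<lambda>y. cl_scale c (F y)) x = cl_scale c (dirac_r F x)"
  unfolding dirac_r_def by (simp add: cpartial_scale cl_mult_scale_left cl_scale_sum)

lemma dirac_l_uminus: "Ck 1 \<Omega> F \<Longrightarrow> x \<in> \<Omega> \<Longrightarrow> dirac_l (\<lambda>y. - F y) x = - dirac_l F x"
  unfolding dirac_l_def by (simp add: cpartial_uminus cl_mult_minus_right sum_negf)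

lemma dirac_r_uminus: "Ck 1 \<Omega> F \<Longrightarrow> x \<in> \<Omega> \<Longrightarrow> dirac_r (\<lambda>y. - F y) x = - dirac_r F x"
  unfolding dirac_r_def by (simp add: cpartial_uminus cl_mult_minus_left sum_negf)

lemma cpartial2_add: "Ck 2 \<Omega> F \<Longrightarrow> Ck 2 \<Omega> G \<Longrightarrow> x \<in> \<Omega> \<Longrightarrow>
  cpartial j (cpartial j (\<lambda>y. F y + G y)) x = cpartial j (cpartial j F) x + cpartial j (cpartial j G) x"
proof -
  assume a: "Ck 2 \<Omega> F" "Ck 2 \<Omega> G" "x \<in> \<Omega>"
  have F1: "Ck 1 \<Omega> F" "Ck 1 \<Omega> G" using a Ck_mono by (auto simp: numeral_2_eq_2)
  have "cpartial j (cpartial j (\<lambda>y. F y + G y)) x = cpartial j (\<lambda>y. cpartial j F y + cpartial j G y) x"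
    using cpartial_add[OF F1] by (intro cpartial_local a) auto
  also have "\<dots> = cpartial j (cpartial j F) x + cpartial j (cpartial j G) x"
    using a by (intro cpartial_add Ck_cpartial) (auto simp: numeral_2_eq_2)
  finally show ?thesis .
qed

lemma laplace_add: "Ck 2 \<Omega> F \<Longrightarrow> Ck 2 \<Omega> G \<Longrightarrow> x \<in> \<Omega> \<Longrightarrow>
  laplace (\<lambda>y. F y + G y) x = laplace F x + laplace G x"
  unfolding laplace_def by (simp add: cpartial2_add sum.distrib)

lemma cpartial2_scale: "Ck 2 \<Omega> F \<Longrightarrow> x \<in> \<Omega> \<Longrightarrow>
  cpartial j (cpartial j (\<lambda>y. cl_scale c (F y))) x = cl_scale c (cpartial j (cpartial j F) x)"
proof -
  assume a: "Ck 2 \<Omega> F" "x \<in> \<Omega>"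
  have F1: "Ck 1 \<Omega> F" using a Ck_mono by (auto simp: numeral_2_eq_2)
  have "cpartial j (cpartial j (\<lambda>y. cl_scale c (F y))) x = cpartial j (\<lambda>y. cl_scale c (cpartial j F y)) x"
    using cpartial_scale[OF F1] by (intro cpartial_local a) auto
  also have "\<dots> = cl_scale c (cpartial j (cpartial j F) x)"
    using a by (intro cpartial_scale Ck_cpartial) (auto simp: numeral_2_eq_2)
  finally show ?thesis .
qed

lemma laplace_scale: "Ck 2 \<Omega> F \<Longrightarrow> x \<in> \<Omega> \<Longrightarrow> laplace (\<lambda>y. cl_scale c (F y)) x = cl_scale c (laplace F x)"
  unfolding laplace_def by (simp add: cpartial2_scale cl_scale_sum)

lemma cpartial_dirac_l:
  assumes a: "Ck 2 \<Omega> F" "x \<in> \<Omega>"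
  shows "cpartial i (dirac_l F) x = (\<Sum>j\<in>UNIV. cl_e j \<odot> cpartial i (cpartial j F) x)"
proof -
  have "cpartial i (dirac_l F) x = (\<Sum>j\<in>UNIV. cpartial i (\<lambda>y. cl_e j \<odot> cpartial j F y) x)"
    unfolding dirac_l_eq
    by (rule cpartial_sum, simp, rule Ck_gen_left, rule Ck2_cpartial[OF a(1)], rule a(2))
  also have "\<dots> = (\<Sum>j\<in>UNIV. cl_e j \<odot> cpartial i (cpartial j F) x)"
    by (intro sum.cong refl cpartial_gen_left Ck2_cpartial[OF a(1)] a(2))
  finally show ?thesis .
qed

lemma cpartial_dirac_r:
  assumes a: "Ck 2 \<Omega> F" "x \<in> \<Omega>"
  shows "cpartial i (dirac_r F) x = (\<Sum>j\<in>UNIV. cpartial i (cpartial j F) x \<odot> cl_e j)"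
proof -
  have "cpartial i (dirac_r F) x = (\<Sum>j\<in>UNIV. cpartial i (\<lambda>y. cpartial j F y \<odot> cl_e j) x)"
    unfolding dirac_r_eq
    by (rule cpartial_sum, simp, rule Ck_gen_right, rule Ck2_cpartial[OF a(1)], rule a(2))
  also have "\<dots> = (\<Sum>j\<in>UNIV. cpartial i (cpartial j F) x \<odot> cl_e j)"
    by (intro sum.cong refl cpartial_gen_right Ck2_cpartial[OF a(1)] a(2))
  finally show ?thesis .
qed

lemma dirac_l_dirac_l_expand:
  assumes "Ck 2 \<Omega> F" "x \<in> \<Omega>"
  shows "dirac_l (dirac_l F) x = (\<Sum>i\<in>UNIV. \<Sum>j\<in>UNIV. cl_e i \<odot> (cl_e j \<odot> cpartial i (cpartial j F) x))"
  unfolding dirac_l_def[of "dirac_l F"] by (simp add: cpartial_dirac_l[OF assms] cl_mult_sum_right)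

lemma dirac_r_dirac_r_expand:
  assumes "Ck 2 \<Omega> F" "x \<in> \<Omega>"
  shows "dirac_r (dirac_r F) x = (\<Sum>i\<in>UNIV. \<Sum>j\<in>UNIV. (cpartial i (cpartial j F) x \<odot> cl_e j) \<odot> cl_e i)"
  unfolding dirac_r_def[of "dirac_r F"] by (simp add: cpartial_dirac_r[OF assms] cl_mult_sum_left)

lemma dirac_l_dirac_r_expand:
  assumes "Ck 2 \<Omega> F" "x \<in> \<Omega>"
  shows "dirac_l (dirac_r F) x = (\<Sum>i\<in>UNIV. \<Sum>j\<in>UNIV. cl_e i \<odot> (cpartial i (cpartial j F) x \<odot> cl_e j))"
  unfolding dirac_l_def[of "dirac_r F"] by (simp add: cpartial_dirac_r[OF assms] cl_mult_sum_right)

lemma dirac_r_dirac_l_expand: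
  assumes "Ck 2 \<Omega> F" "x \<in> \<Omega>"
  shows "dirac_r (dirac_l F) x = (\<Sum>j\<in>UNIV. \<Sum>i\<in>UNIV. (cl_e i \<odot> cpartial j (cpartial i F) x) \<odot> cl_e j)"
  unfolding dirac_r_def[of "dirac_l F"] by (simp add: cpartial_dirac_l[OF assms] cl_mult_sum_left)

lemma dirac_l_dirac_r_commute:
  assumes a: "Ck 2 \<Omega> F" "x \<in> \<Omega>"
  shows "dirac_l (dirac_r F) x = dirac_r (dirac_l F) x"
proof -
  have "dirac_r (dirac_l F) x = (\<Sum>i\<in>UNIV. \<Sum>j\<in>UNIV. (cl_e i \<odot> cpartial j (cpartial i F) x) \<odot> cl_e j)"
    unfolding dirac_r_dirac_l_expand[OF a] by (rule sum.swap)
  also have "\<dots> = (\<Sum>i\<in>UNIV. \<Sum>j\<in>UNIV. cl_e i \<odot> (cpartial i (cpartial j F) x \<odot> cl_e j))"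
    by (intro sum.cong refl) (simp add: cpartial_commute[OF a] gen_mult_assoc)
  finally show ?thesis unfolding dirac_l_dirac_r_expand[OF a] by (simp add: eval_nat_numeral)
qed

lemma inframonogenic_sum_eq:
  assumes a: "Ck 2 \<Omega> F" "x \<in> \<Omega>"
  shows "(\<Sum>i\<in>UNIV. \<Sum>j\<in>UNIV. cl_e i \<odot> cpartial i (cpartial j F) x \<odot> cl_e j) = dirac_l (dirac_r F) x"
  unfolding dirac_l_dirac_r_expand[OF a] by (simp add: gen_mult_assoc)

lemma dirac_l_square:
  assumes a: "Ck 2 \<Omega> F" "x \<in> \<Omega>"
  shows "dirac_l (dirac_l F) x = - laplace F x"
proof -
  have "dirac_l (dirac_l F) x = - (\<Sum>i\<in>UNIV. cpartial i (cpartial i F) x)"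
    unfolding dirac_l_dirac_l_expand[OF a]
    by (rule symmetric_double_sum_left) (rule cpartial_commute[OF a])
  thus ?thesis by (simp add: laplace_def)
qed

lemma dirac_r_square:
  assumes a: "Ck 2 \<Omega> F" "x \<in> \<Omega>"
  shows "dirac_r (dirac_r F) x = - laplace F x"
proof -
  have "dirac_r (dirac_r F) x = - (\<Sum>i\<in>UNIV. cpartial i (cpartial i F) x)"
    unfolding dirac_r_dirac_r_expand[OF a]
    by (rule symmetric_double_sum_right) (rule cpartial_commute[OF a])
  thus ?thesis by (simp add: laplace_def)
qed
subsection \<open>Product rules\<close>

lemma dirac_l_vec_right_mult:
  assumes a: "Ck 1 \<Omega> H" "x \<in> \<Omega>"
  shows "dirac_l (\<lambda>y. vec_right_mult y (H y)) x = sandwich (H x) + vec_right_mult x (dirac_l H x)"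
proof -
  have "dirac_l (\<lambda>y. vec_right_mult y (H y)) x = (\<Sum>j\<in>UNIV. cl_e j \<odot> (H x \<odot> cl_e j + vec_right_mult x (cpartial j H x)))"
    unfolding dirac_l_def by (simp add: cpartial_vec_right_mult[OF a])
  also have "\<dots> = (\<Sum>j\<in>UNIV. cl_e j \<odot> H x \<odot> cl_e j) + (\<Sum>j\<in>UNIV. \<Sum>k\<in>UNIV. cl_scale (x$k) (cl_e j \<odot> cpartial j H x \<odot> cl_e k))"
    unfolding vec_right_mult_def by (simp add: cl_mult_add_right sum.distrib cl_mult_sum_right cl_mult_scale_right gen_mult_assoc)
  also have "\<dots> = sandwich (H x) + vec_right_mult x (dirac_l H x)"
  proof -
    have "vec_right_mult x (dirac_l H x) = (\<Sum>k\<in>UNIV. \<Sum>j\<in>UNIV. cl_scale (x$k) (cl_e j \<odot> cpartial j H x \<odot> cl_e k))"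
      unfolding vec_right_mult_def dirac_l_def by (simp add: cl_mult_sum_left cl_scale_sum)
    also have "\<dots> = (\<Sum>j\<in>UNIV. \<Sum>k\<in>UNIV. cl_scale (x$k) (cl_e j \<odot> cpartial j H x \<odot> cl_e k))"
      by (rule sum.swap)
    finally show ?thesis unfolding sandwich_def by simp
  qed
  finally show ?thesis .
qed

lemma dirac_r_vec_left_mult:
  assumes a: "Ck 1 \<Omega> H" "x \<in> \<Omega>"
  shows "dirac_r (\<lambda>y. vec_left_mult y (H y)) x = sandwich (H x) + vec_left_mult x (dirac_r H x)"
proof -
  have "dirac_r (\<lambda>y. vec_left_mult y (H y)) x = (\<Sum>j\<in>UNIV. (cl_e j \<odot> H x + vec_left_mult x (cpartial j H x)) \<odot> cl_e j)"
    unfolding dirac_r_def by (simp add: cpartial_vec_left_mult[OF a])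
  also have "\<dots> = (\<Sum>j\<in>UNIV. cl_e j \<odot> H x \<odot> cl_e j) + (\<Sum>j\<in>UNIV. \<Sum>k\<in>UNIV. cl_scale (x$k) (cl_e k \<odot> cpartial j H x \<odot> cl_e j))"
    unfolding vec_left_mult_def by (simp add: cl_mult_add_left sum.distrib cl_mult_sum_left cl_mult_scale_left)
  also have "\<dots> = sandwich (H x) + vec_left_mult x (dirac_r H x)"
  proof -
    have "vec_left_mult x (dirac_r H x) = (\<Sum>k\<in>UNIV. \<Sum>j\<in>UNIV. cl_scale (x$k) (cl_e k \<odot> cpartial j H x \<odot> cl_e j))"
      unfolding vec_left_mult_def dirac_r_def by (simp add: cl_mult_sum_right cl_scale_sum gen_mult_assoc)
    also have "\<dots> = (\<Sum>j\<in>UNIV. \<Sum>k\<in>UNIV. cl_scale (x$k) (cl_e k \<odot> cpartial j H x \<odot> cl_e j))"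
      by (rule sum.swap)
    finally show ?thesis unfolding sandwich_def by simp
  qed
  finally show ?thesis .
qed

lemma dirac_l_sandwich:
  assumes a: "Ck 1 \<Omega> F" "x \<in> \<Omega>"
  shows "dirac_l (\<lambda>y. sandwich (F y)) x + sandwich (dirac_l F x) = cl_scale (-2) (dirac_r F x)"
proof -
  have "dirac_l (\<lambda>y. sandwich (F y)) x + sandwich (dirac_l F x) =
      (\<Sum>i\<in>UNIV. cl_e i \<odot> sandwich (cpartial i F x) + sandwich (cl_e i \<odot> cpartial i F x))"
    unfolding dirac_l_def cpartial_sandwich[OF a] by (simp add: sandwich_sum sum.distrib)
  also have "\<dots> = cl_scale (-2) (dirac_r F x)"
    unfolding dirac_r_def by (simp add: gen_left_sandwich cl_scale_sum)
  finally show ?thesis .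
qed

lemma dirac_r_sandwich:
  assumes a: "Ck 1 \<Omega> F" "x \<in> \<Omega>"
  shows "dirac_r (\<lambda>y. sandwich (F y)) x + sandwich (dirac_r F x) = cl_scale (-2) (dirac_l F x)"
proof -
  have "dirac_r (\<lambda>y. sandwich (F y)) x + sandwich (dirac_r F x) =
      (\<Sum>i\<in>UNIV. sandwich (cpartial i F x) \<odot> cl_e i + sandwich (cpartial i F x \<odot> cl_e i))"
    unfolding dirac_r_def cpartial_sandwich[OF a] by (simp add: sandwich_sum sum.distrib)
  also have "\<dots> = cl_scale (-2) (dirac_l F x)"
    unfolding dirac_l_def by (simp add: gen_right_sandwich cl_scale_sum)
  finally show ?thesis .
qed

lemma laplace_sandwich:
  assumes a: "Ck 2 \<Omega> F" "x \<in> \<Omega>"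
  shows "laplace (\<lambda>y. sandwich (F y)) x = sandwich (laplace F x)"
proof -
  have "cpartial j (cpartial j (\<lambda>y. sandwich (F y))) x = sandwich (cpartial j (cpartial j F) x)" for j
  proof -
    have "cpartial j (cpartial j (\<lambda>y. sandwich (F y))) x = cpartial j (\<lambda>y. sandwich (cpartial j F y)) x"
      by (rule cpartial_local[OF _ a(2)]) (simp add: cpartial_sandwich[OF Ck2_imp_Ck1[OF a(1)]])
    also have "\<dots> = sandwich (cpartial j (cpartial j F) x)"
      by (rule cpartial_sandwich[OF Ck2_cpartial[OF a(1)] a(2)])
    finally show ?thesis .
  qed
  thus ?thesis unfolding laplace_def by (simp add: sandwich_sum)
qed

lemma laplace_vec_right_mult:
  assumes a: "Ck 2 \<Omega> H" "x \<in> \<Omega>"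
  shows "laplace (\<lambda>y. vec_right_mult y (H y)) x = cl_scale 2 (dirac_r H x) + vec_right_mult x (laplace H x)"
proof -
  have H1: "Ck 1 \<Omega> H" by (rule Ck2_imp_Ck1[OF a(1)])
  have "cpartial j (cpartial j (\<lambda>y. vec_right_mult y (H y))) x =
     cpartial j H x \<odot> cl_e j + (cpartial j H x \<odot> cl_e j + vec_right_mult x (cpartial j (cpartial j H) x))" for j
  proof -
    have "cpartial j (cpartial j (\<lambda>y. vec_right_mult y (H y))) x =
        cpartial j (\<lambda>y. H y \<odot> cl_e j + vec_right_mult y (cpartial j H y)) x"
      by (rule cpartial_local[OF _ a(2)]) (simp add: cpartial_vec_right_mult[OF H1])
    also have "\<dots> = cpartial j (\<lambda>y. H y \<odot> cl_e j) x + cpartial j (\<lambda>y. vec_right_mult y (cpartial j H y)) x"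
      by (rule cpartial_add[OF Ck_gen_right[OF H1] Ck_vec_right_mult[OF Ck2_cpartial[OF a(1)]] a(2)])
    also have "\<dots> = cpartial j H x \<odot> cl_e j + (cpartial j H x \<odot> cl_e j + vec_right_mult x (cpartial j (cpartial j H) x))"
      by (simp add: cpartial_gen_right[OF H1 a(2)] cpartial_vec_right_mult[OF Ck2_cpartial[OF a(1)] a(2)])
    finally show ?thesis .
  qed
  hence "laplace (\<lambda>y. vec_right_mult y (H y)) x =
     (\<Sum>j\<in>UNIV. cpartial j H x \<odot> cl_e j) + (\<Sum>j\<in>UNIV. cpartial j H x \<odot> cl_e j) + (\<Sum>j\<in>UNIV. vec_right_mult x (cpartial j (cpartial j H) x))"
    unfolding laplace_def by (simp add: sum.distrib add.assoc sum_distrib_left)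
  also have "\<dots> = cl_scale 2 (dirac_r H x) + vec_right_mult x (laplace H x)"
    unfolding dirac_r_def laplace_def by (simp add: vec_right_mult_sum cl_scale_two)
  finally show ?thesis .
qed

lemma laplace_vec_left_mult:
  assumes a: "Ck 2 \<Omega> H" "x \<in> \<Omega>"
  shows "laplace (\<lambda>y. vec_left_mult y (H y)) x = cl_scale 2 (dirac_l H x) + vec_left_mult x (laplace H x)"
proof -
  have H1: "Ck 1 \<Omega> H" by (rule Ck2_imp_Ck1[OF a(1)])
  have "cpartial j (cpartial j (\<lambda>y. vec_left_mult y (H y))) x =
     cl_e j \<odot> cpartial j H x + (cl_e j \<odot> cpartial j H x + vec_left_mult x (cpartial j (cpartial j H) x))" for j
  proof -
    have "cpartial j (cpartial j (\<lambda>y. vec_left_mult y (H y))) x =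
        cpartial j (\<lambda>y. cl_e j \<odot> H y + vec_left_mult y (cpartial j H y)) x"
      by (rule cpartial_local[OF _ a(2)]) (simp add: cpartial_vec_left_mult[OF H1])
    also have "\<dots> = cpartial j (\<lambda>y. cl_e j \<odot> H y) x + cpartial j (\<lambda>y. vec_left_mult y (cpartial j H y)) x"
      by (rule cpartial_add[OF Ck_gen_left[OF H1] Ck_vec_left_mult[OF Ck2_cpartial[OF a(1)]] a(2)])
    also have "\<dots> = cl_e j \<odot> cpartial j H x + (cl_e j \<odot> cpartial j H x + vec_left_mult x (cpartial j (cpartial j H) x))"
      by (simp add: cpartial_gen_left[OF H1 a(2)] cpartial_vec_left_mult[OF Ck2_cpartial[OF a(1)] a(2)])
    finally show ?thesis .
  qed
  hence "laplace (\<lambda>y. vec_left_mult y (H y)) x =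
     (\<Sum>j\<in>UNIV. cl_e j \<odot> cpartial j H x) + (\<Sum>j\<in>UNIV. cl_e j \<odot> cpartial j H x) + (\<Sum>j\<in>UNIV. vec_left_mult x (cpartial j (cpartial j H) x))"
    unfolding laplace_def by (simp add: sum.distrib add.assoc sum_distrib_left)
  also have "\<dots> = cl_scale 2 (dirac_l H x) + vec_left_mult x (laplace H x)"
    unfolding dirac_l_def laplace_def by (simp add: vec_left_mult_sum cl_scale_two)
  finally show ?thesis .
qed

subsection \<open>The three expressions for a C^4 function\<close>

context
  fixes f :: "real ^ 'n::{finite,linorder} \<Rightarrow> 'n clifford"
  assumes f_C4: "Ck 4 \<Omega> f"
begin

lemma f_C3: "Ck 3 \<Omega> f" by (rule Ck4_imp_Ck3[OF f_C4])
lemma f_C2: "Ck 2 \<Omega> f" by (rule Ck3_imp_Ck2[OF f_C3])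
lemma f_C1: "Ck 1 \<Omega> f" by (rule Ck2_imp_Ck1[OF f_C2])

lemma dirac_l_f_C3: "Ck 3 \<Omega> (dirac_l f)"
  using Ck_dirac_l[of 3 f] f_C4 by (simp add: eval_nat_numeral)
lemma dirac_r_f_C3: "Ck 3 \<Omega> (dirac_r f)"
  using Ck_dirac_r[of 3 f] f_C4 by (simp add: eval_nat_numeral)
lemma dirac_l_f_C2: "Ck 2 \<Omega> (dirac_l f)" by (rule Ck3_imp_Ck2[OF dirac_l_f_C3])
lemma dirac_r_f_C2: "Ck 2 \<Omega> (dirac_r f)" by (rule Ck3_imp_Ck2[OF dirac_r_f_C3])
lemma dirac_l_f_C1: "Ck 1 \<Omega> (dirac_l f)" by (rule Ck2_imp_Ck1[OF dirac_l_f_C2])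
lemma dirac_r_f_C1: "Ck 1 \<Omega> (dirac_r f)" by (rule Ck2_imp_Ck1[OF dirac_r_f_C2])
lemma dirac_l_dirac_l_f_C1: "Ck 1 \<Omega> (dirac_l (dirac_l f))"
  by (rule Ck2_imp_Ck1)
    (use Ck_dirac_l[of 2 "dirac_l f"] dirac_l_f_C3 in \<open>simp add: eval_nat_numeral\<close>)
lemma dirac_r_dirac_r_f_C1: "Ck 1 \<Omega> (dirac_r (dirac_r f))"
  by (rule Ck2_imp_Ck1)
    (use Ck_dirac_r[of 2 "dirac_r f"] dirac_r_f_C3 in \<open>simp add: eval_nat_numeral\<close>)
lemma laplace_f_C2: "Ck 2 \<Omega> (laplace f)"
  using Ck_laplace[of 2 f] f_C4 by (simp add: eval_nat_numeral)
lemma laplace_f_C1: "Ck 1 \<Omega> (laplace f)" by (rule Ck2_imp_Ck1[OF laplace_f_C2])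

lemma dirac_l_square_f_x:
  assumes y: "y \<in> \<Omega>"
  shows "dirac_l (dirac_l (\<lambda>y. vec_right_mult y (f y))) y =
    cl_scale (-2) (dirac_r f y) + vec_right_mult y (dirac_l (dirac_l f) y)"
proof -
  have "dirac_l (dirac_l (\<lambda>y. vec_right_mult y (f y))) y =
      dirac_l (\<lambda>z. sandwich (f z) + vec_right_mult z (dirac_l f z)) y"
    using dirac_l_vec_right_mult[OF f_C1] by (intro dirac_l_local y) blast
  also have "\<dots> = dirac_l (\<lambda>z. sandwich (f z)) y + dirac_l (\<lambda>z. vec_right_mult z (dirac_l f z)) y"
    by (rule dirac_l_add[OF Ck_sandwich[OF f_C1] Ck_vec_right_mult[OF dirac_l_f_C1] y])
  also have "\<dots> = dirac_l (\<lambda>z. sandwich (f z)) y + (sandwich (dirac_l f y) + vec_right_mult y (dirac_l (dirac_l f) y))"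
    by (simp add: dirac_l_vec_right_mult[OF dirac_l_f_C1 y])
  also have "\<dots> = cl_scale (-2) (dirac_r f y) + vec_right_mult y (dirac_l (dirac_l f) y)"
    using dirac_l_sandwich[OF f_C1 y] by (simp add: add.assoc[symmetric])
  finally show ?thesis .
qed

lemma dirac_l_cube_f_x:
  assumes x: "x \<in> \<Omega>"
  shows "dirac_l (dirac_l (dirac_l (\<lambda>y. f y \<odot> cl_vec y))) x =
    cl_scale (-2) (dirac_l (dirac_r f) x)
    + (sandwich (dirac_l (dirac_l f) x) + vec_right_mult x (dirac_l (dirac_l (dirac_l f)) x))"
proof -
  have "dirac_l (dirac_l (dirac_l (\<lambda>y. vec_right_mult y (f y)))) x =
      dirac_l (\<lambda>z. cl_scale (-2) (dirac_r f z) + vec_right_mult z (dirac_l (dirac_l f) z)) x"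
    using dirac_l_square_f_x by (intro dirac_l_local x) blast
  also have "\<dots> = dirac_l (\<lambda>z. cl_scale (-2) (dirac_r f z)) x
      + dirac_l (\<lambda>z. vec_right_mult z (dirac_l (dirac_l f) z)) x"
    by (rule dirac_l_add[OF Ck_scale[OF dirac_r_f_C1] Ck_vec_right_mult[OF dirac_l_dirac_l_f_C1] x])
  also have "\<dots> = cl_scale (-2) (dirac_l (dirac_r f) x)
      + (sandwich (dirac_l (dirac_l f) x) + vec_right_mult x (dirac_l (dirac_l (dirac_l f)) x))"
    by (simp add: dirac_l_scale[OF dirac_r_f_C1 x] dirac_l_vec_right_mult[OF dirac_l_dirac_l_f_C1 x])
  finally show ?thesis by (simp add: cl_vec_right)
qed

lemma dirac_r_square_x_f:
  assumes y: "y \<in> \<Omega>"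
  shows "dirac_r (dirac_r (\<lambda>y. vec_left_mult y (f y))) y =
    cl_scale (-2) (dirac_l f y) + vec_left_mult y (dirac_r (dirac_r f) y)"
proof -
  have "dirac_r (dirac_r (\<lambda>y. vec_left_mult y (f y))) y =
      dirac_r (\<lambda>z. sandwich (f z) + vec_left_mult z (dirac_r f z)) y"
    using dirac_r_vec_left_mult[OF f_C1] by (intro dirac_r_local y) blast
  also have "\<dots> = dirac_r (\<lambda>z. sandwich (f z)) y + dirac_r (\<lambda>z. vec_left_mult z (dirac_r f z)) y"
    by (rule dirac_r_add[OF Ck_sandwich[OF f_C1] Ck_vec_left_mult[OF dirac_r_f_C1] y])
  also have "\<dots> = dirac_r (\<lambda>z. sandwich (f z)) y + (sandwich (dirac_r f y) + vec_left_mult y (dirac_r (dirac_r f) y))"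
    by (simp add: dirac_r_vec_left_mult[OF dirac_r_f_C1 y])
  also have "\<dots> = cl_scale (-2) (dirac_l f y) + vec_left_mult y (dirac_r (dirac_r f) y)"
    using dirac_r_sandwich[OF f_C1 y] by (simp add: add.assoc[symmetric])
  finally show ?thesis .
qed

lemma dirac_r_cube_x_f:
  assumes x: "x \<in> \<Omega>"
  shows "dirac_r (dirac_r (dirac_r (\<lambda>y. cl_vec y \<odot> f y))) x =
    cl_scale (-2) (dirac_r (dirac_l f) x)
    + (sandwich (dirac_r (dirac_r f) x) + vec_left_mult x (dirac_r (dirac_r (dirac_r f)) x))"
proof -
  have "dirac_r (dirac_r (dirac_r (\<lambda>y. vec_left_mult y (f y)))) x =
      dirac_r (\<lambda>z. cl_scale (-2) (dirac_l f z) + vec_left_mult z (dirac_r (dirac_r f) z)) x"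
    using dirac_r_square_x_f by (intro dirac_r_local x) blast
  also have "\<dots> = dirac_r (\<lambda>z. cl_scale (-2) (dirac_l f z)) x
      + dirac_r (\<lambda>z. vec_left_mult z (dirac_r (dirac_r f) z)) x"
    by (rule dirac_r_add[OF Ck_scale[OF dirac_l_f_C1] Ck_vec_left_mult[OF dirac_r_dirac_r_f_C1] x])
  also have "\<dots> = cl_scale (-2) (dirac_r (dirac_l f) x)
      + (sandwich (dirac_r (dirac_r f) x) + vec_left_mult x (dirac_r (dirac_r (dirac_r f)) x))"
    by (simp add: dirac_r_scale[OF dirac_l_f_C1 x] dirac_r_vec_left_mult[OF dirac_r_dirac_r_f_C1 x])
  finally show ?thesis by (simp add: cl_vec_left)
qed

lemma laplace_x_f_x:
  assumes y: "y \<in> \<Omega>"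
  shows "laplace (\<lambda>y. vec_right_mult y (vec_left_mult y (f y))) y =
    cl_scale 2 (sandwich (f y)) + cl_scale 2 (vec_left_mult y (dirac_r f y))
    + cl_scale 2 (vec_right_mult y (dirac_l f y)) + vec_right_mult y (vec_left_mult y (laplace f y))"
  by (simp add: laplace_vec_right_mult[OF Ck_vec_left_mult[OF f_C2] y] dirac_r_vec_left_mult[OF f_C1 y]
      laplace_vec_left_mult[OF f_C2 y] cl_scale_add vec_right_mult_add vec_right_mult_scale add.assoc)

lemma laplace_square_x_f_x:
  assumes x: "x \<in> \<Omega>"
  shows "laplace (laplace (\<lambda>y. cl_vec y \<odot> f y \<odot> cl_vec y)) x =
    cl_scale 2 (sandwich (laplace f x))
    + cl_scale 2 (cl_scale 2 (dirac_l (dirac_r f) x) + vec_left_mult x (laplace (dirac_r f) x))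
    + cl_scale 2 (cl_scale 2 (dirac_r (dirac_l f) x) + vec_right_mult x (laplace (dirac_l f) x))
    + (cl_scale 2 (sandwich (laplace f x) + vec_left_mult x (dirac_r (laplace f) x))
       + vec_right_mult x (cl_scale 2 (dirac_l (laplace f) x) + vec_left_mult x (laplace (laplace f) x)))"
proof -
  have V1: "Ck 2 \<Omega> (\<lambda>y. cl_scale 2 (sandwich (f y)))"
    by (rule Ck_scale[OF Ck_sandwich[OF f_C2]])
  have V2: "Ck 2 \<Omega> (\<lambda>y. cl_scale 2 (vec_left_mult y (dirac_r f y)))"
    by (rule Ck_scale[OF Ck_vec_left_mult[OF dirac_r_f_C2]])
  have V3: "Ck 2 \<Omega> (\<lambda>y. cl_scale 2 (vec_right_mult y (dirac_l f y)))"
    by (rule Ck_scale[OF Ck_vec_right_mult[OF dirac_l_f_C2]])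
  have V4: "Ck 2 \<Omega> (\<lambda>y. vec_right_mult y (vec_left_mult y (laplace f y)))"
    by (rule Ck_vec_right_mult[OF Ck_vec_left_mult[OF laplace_f_C2]])
  note V12 = Ck_add[OF V1 V2]
  note V123 = Ck_add[OF V12 V3]
  have "laplace (laplace (\<lambda>y. vec_right_mult y (vec_left_mult y (f y)))) x =
    laplace (\<lambda>y. cl_scale 2 (sandwich (f y)) + cl_scale 2 (vec_left_mult y (dirac_r f y))
      + cl_scale 2 (vec_right_mult y (dirac_l f y)) + vec_right_mult y (vec_left_mult y (laplace f y))) x"
    using laplace_x_f_x by (intro laplace_local x) blast
  also have "\<dots> = laplace (\<lambda>y. cl_scale 2 (sandwich (f y))) x
     + laplace (\<lambda>y. cl_scale 2 (vec_left_mult y (dirac_r f y))) x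
     + laplace (\<lambda>y. cl_scale 2 (vec_right_mult y (dirac_l f y))) x
     + laplace (\<lambda>y. vec_right_mult y (vec_left_mult y (laplace f y))) x"
    by (simp only: laplace_add[OF V123 V4 x] laplace_add[OF V12 V3 x] laplace_add[OF V1 V2 x])
  also have "\<dots> = cl_scale 2 (sandwich (laplace f x))
    + cl_scale 2 (cl_scale 2 (dirac_l (dirac_r f) x) + vec_left_mult x (laplace (dirac_r f) x))
    + cl_scale 2 (cl_scale 2 (dirac_r (dirac_l f) x) + vec_right_mult x (laplace (dirac_l f) x))
    + (cl_scale 2 (sandwich (laplace f x) + vec_left_mult x (dirac_r (laplace f) x))
       + vec_right_mult x (cl_scale 2 (dirac_l (laplace f) x) + vec_left_mult x (laplace (laplace f) x)))"
    by (simp only: laplace_scale[OF Ck_sandwich[OF f_C2] x] laplace_sandwich[OF f_C2 x]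
        laplace_scale[OF Ck_vec_left_mult[OF dirac_r_f_C2] x] laplace_vec_left_mult[OF dirac_r_f_C2 x]
        laplace_scale[OF Ck_vec_right_mult[OF dirac_l_f_C2] x] laplace_vec_right_mult[OF dirac_l_f_C2 x]
        laplace_vec_right_mult[OF Ck_vec_left_mult[OF laplace_f_C2] x]
        dirac_r_vec_left_mult[OF laplace_f_C1 x] laplace_vec_left_mult[OF laplace_f_C2 x])
  finally show ?thesis by (simp add: cl_vec_left cl_vec_right)
qed

lemma harmonic_consequences:
  assumes L0: "\<forall>y\<in>\<Omega>. laplace f y = 0" and x: "x \<in> \<Omega>"
  shows "dirac_l (dirac_l f) x = 0" "dirac_r (dirac_r f) x = 0"
    "dirac_l (dirac_l (dirac_l f)) x = 0" "dirac_r (dirac_r (dirac_r f)) x = 0"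
    "laplace (dirac_r f) x = 0" "laplace (dirac_l f) x = 0"
    "dirac_r (laplace f) x = 0" "dirac_l (laplace f) x = 0" "laplace (laplace f) x = 0"
    "laplace f x = 0"
proof -
  have DL0: "\<forall>y\<in>\<Omega>. dirac_l (dirac_l f) y = 0" using dirac_l_square[OF f_C2] L0 by simp
  have DR0: "\<forall>y\<in>\<Omega>. dirac_r (dirac_r f) y = 0" using dirac_r_square[OF f_C2] L0 by simp
  show "dirac_l (dirac_l f) x = 0" "dirac_r (dirac_r f) x = 0" using DL0 DR0 x by auto
  show "dirac_l (dirac_l (dirac_l f)) x = 0" by (rule dirac_l_zero[OF DL0 x])
  show "dirac_r (dirac_r (dirac_r f)) x = 0" by (rule dirac_r_zero[OF DR0 x])
  have C1: "\<forall>y\<in>\<Omega>. dirac_l (dirac_r f) y = dirac_r (dirac_l f) y"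
    using dirac_l_dirac_r_commute[OF f_C2] by blast
  have "dirac_l (dirac_l (dirac_r f)) x = dirac_l (dirac_r (dirac_l f)) x" by (rule dirac_l_local[OF C1 x])
  also have "\<dots> = dirac_r (dirac_l (dirac_l f)) x" by (rule dirac_l_dirac_r_commute[OF dirac_l_f_C2 x])
  also have "\<dots> = 0" by (rule dirac_r_zero[OF DL0 x])
  finally show "laplace (dirac_r f) x = 0" using dirac_l_square[OF dirac_r_f_C2 x] by simp
  have C2: "\<forall>y\<in>\<Omega>. dirac_r (dirac_l f) y = dirac_l (dirac_r f) y" using C1 by simp
  have "dirac_r (dirac_r (dirac_l f)) x = dirac_r (dirac_l (dirac_r f)) x" by (rule dirac_r_local[OF C2 x])
  also have "\<dots> = dirac_l (dirac_r (dirac_r f)) x" by (rule dirac_l_dirac_r_commute[OF dirac_r_f_C2 x, symmetric])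
  also have "\<dots> = 0" by (rule dirac_l_zero[OF DR0 x])
  finally show "laplace (dirac_l f) x = 0" using dirac_r_square[OF dirac_l_f_C2 x] by simp
  show "dirac_r (laplace f) x = 0" by (rule dirac_r_zero[OF L0 x])
  show "dirac_l (laplace f) x = 0" by (rule dirac_l_zero[OF L0 x])
  show "laplace (laplace f) x = 0" by (rule laplace_zero[OF L0 x])
  show "laplace f x = 0" using L0 x by blast
qed

text \<open>For inframonogenic f, D f D = 0.  Since \<Delta> f = -D D f = -(f D) D and D commutes
  with the right Dirac operator, both Dirac derivatives of \<Delta> f vanish.\<close>

lemma inframonogenic_dirac_laplace:
  assumes I0: "\<forall>y\<in>\<Omega>. dirac_l (dirac_r f) y = 0" and x: "x \<in> \<Omega>"
  shows "dirac_r (laplace f) x = 0" "dirac_l (laplace f) x = 0"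
proof -
  have Z1: "\<forall>y\<in>\<Omega>. dirac_r (dirac_l f) y = 0"
    using dirac_l_dirac_r_commute[OF f_C2] I0 by simp
  have "dirac_r (laplace f) x = dirac_r (\<lambda>y. - dirac_l (dirac_l f) y) x"
    using dirac_l_square[OF f_C2] by (intro dirac_r_local x) simp
  also have "\<dots> = - dirac_r (dirac_l (dirac_l f)) x"
    by (rule dirac_r_uminus[OF dirac_l_dirac_l_f_C1 x])
  also have "dirac_r (dirac_l (dirac_l f)) x = dirac_l (dirac_r (dirac_l f)) x"
    by (rule dirac_l_dirac_r_commute[OF dirac_l_f_C2 x, symmetric])
  also have "\<dots> = 0" by (rule dirac_l_zero[OF Z1 x])
  finally show "dirac_r (laplace f) x = 0" by (simp add: fun_eq_iff)
  have "dirac_l (laplace f) x = dirac_l (\<lambda>y. - dirac_r (dirac_r f) y) x"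
    using dirac_r_square[OF f_C2] by (intro dirac_l_local x) simp
  also have "\<dots> = - dirac_l (dirac_r (dirac_r f)) x"
    by (rule dirac_l_uminus[OF dirac_r_dirac_r_f_C1 x])
  also have "dirac_l (dirac_r (dirac_r f)) x = dirac_r (dirac_l (dirac_r f)) x"
    by (rule dirac_l_dirac_r_commute[OF dirac_r_f_C2 x])
  also have "\<dots> = 0" by (rule dirac_r_zero[OF I0 x])
  finally show "dirac_l (laplace f) x = 0" by (simp add: fun_eq_iff)
qed

text \<open>Consequently every term of the expansions except T (\<Delta> f) vanishes for
  inframonogenic f; in particular D^3 f = D (f D D) = (D f D) D = 0.\<close>

lemma inframonogenic_consequences:
  assumes I0: "\<forall>y\<in>\<Omega>. dirac_l (dirac_r f) y = 0" and x: "x \<in> \<Omega>"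
  shows "dirac_l (dirac_r f) x = 0" "dirac_r (dirac_l f) x = 0"
    "dirac_l (dirac_l (dirac_l f)) x = 0" "dirac_r (dirac_r (dirac_r f)) x = 0"
    "laplace (dirac_r f) x = 0" "laplace (dirac_l f) x = 0"
    "dirac_r (laplace f) x = 0" "dirac_l (laplace f) x = 0" "laplace (laplace f) x = 0"
    "dirac_l (dirac_l f) x = - laplace f x" "dirac_r (dirac_r f) x = - laplace f x"
proof -
  have Z1: "\<forall>y\<in>\<Omega>. dirac_r (dirac_l f) y = 0"
    using dirac_l_dirac_r_commute[OF f_C2] I0 by simp
  show "dirac_l (dirac_r f) x = 0" "dirac_r (dirac_l f) x = 0" using I0 Z1 x by auto
  show "dirac_l (dirac_l f) x = - laplace f x" by (rule dirac_l_square[OF f_C2 x])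
  show "dirac_r (dirac_r f) x = - laplace f x" by (rule dirac_r_square[OF f_C2 x])
  show "laplace (dirac_r f) x = 0"
    using dirac_l_square[OF dirac_r_f_C2 x] dirac_l_zero[OF I0 x] by simp
  show "laplace (dirac_l f) x = 0"
    using dirac_r_square[OF dirac_l_f_C2 x] dirac_r_zero[OF Z1 x] by simp
  show "dirac_r (laplace f) x = 0" "dirac_l (laplace f) x = 0"
    by (rule inframonogenic_dirac_laplace[OF I0 x])+
  show "laplace (laplace f) x = 0"
    using dirac_l_square[OF laplace_f_C2 x] dirac_l_zero[OF _ x] inframonogenic_dirac_laplace(2)[OF I0]
    by simp
  have squares: "\<forall>y\<in>\<Omega>. dirac_l (dirac_l f) y = dirac_r (dirac_r f) y"
    using dirac_l_square[OF f_C2] dirac_r_square[OF f_C2] by simp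
  have "dirac_l (dirac_l (dirac_l f)) x = dirac_l (dirac_r (dirac_r f)) x"
    by (rule dirac_l_local[OF squares x])
  also have "\<dots> = dirac_r (dirac_l (dirac_r f)) x"
    by (rule dirac_l_dirac_r_commute[OF dirac_r_f_C2 x])
  also have "\<dots> = 0" by (rule dirac_r_zero[OF I0 x])
  finally show "dirac_l (dirac_l (dirac_l f)) x = 0" .
  have "dirac_r (dirac_r (dirac_r f)) x = dirac_r (dirac_l (dirac_l f)) x"
    using squares by (intro dirac_r_local x) simp
  also have "\<dots> = dirac_l (dirac_r (dirac_l f)) x"
    by (rule dirac_l_dirac_r_commute[OF dirac_l_f_C2 x, symmetric])
  also have "\<dots> = 0" by (rule dirac_l_zero[OF Z1 x])
  finally show "dirac_r (dirac_r (dirac_r f)) x = 0" .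
qed

lemma inframonogenic_on_iff: "inframonogenic_on \<Omega> f \<longleftrightarrow> (\<forall>x\<in>\<Omega>. dirac_l (dirac_r f) x = 0)"
  unfolding inframonogenic_on_def using inframonogenic_sum_eq[OF f_C2] by simp

text \<open>If f is harmonic, the three expressions equal -2 D f D, -2 D f D and 8 D f D, so
  each of them vanishes exactly where f is inframonogenic.\<close>

lemma harmonic_case:
  assumes "harmonic_on \<Omega> f"
  shows "inframonogenic_on \<Omega> f \<longleftrightarrow> (\<forall>x\<in>\<Omega>. dirac_l (dirac_l (dirac_l (\<lambda>y. f y \<odot> cl_vec y))) x = 0)"
    and "inframonogenic_on \<Omega> f \<longleftrightarrow> (\<forall>x\<in>\<Omega>. dirac_r (dirac_r (dirac_r (\<lambda>y. cl_vec y \<odot> f y))) x = 0)"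
    and "inframonogenic_on \<Omega> f \<longleftrightarrow> (\<forall>x\<in>\<Omega>. laplace (laplace (\<lambda>y. cl_vec y \<odot> f y \<odot> cl_vec y)) x = 0)"
proof -
  have "\<forall>y\<in>\<Omega>. laplace f y = 0" using assms by (simp add: harmonic_on_def)
  note vanish = harmonic_consequences[OF this]
  have commute: "dirac_r (dirac_l f) x = dirac_l (dirac_r f) x" if "x \<in> \<Omega>" for x
    using dirac_l_dirac_r_commute[OF f_C2 that] by simp
  have e1: "dirac_l (dirac_l (dirac_l (\<lambda>y. f y \<odot> cl_vec y))) x = cl_scale (-2) (dirac_l (dirac_r f) x)"
    if x: "x \<in> \<Omega>" for x
    by (simp add: dirac_l_cube_f_x[OF x] vanish[OF x])
  have e2: "dirac_r (dirac_r (dirac_r (\<lambda>y. cl_vec y \<odot> f y))) x = cl_scale (-2) (dirac_l (dirac_r f) x)"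
    if x: "x \<in> \<Omega>" for x
    by (simp add: dirac_r_cube_x_f[OF x] vanish[OF x] commute[OF x])
  have e3: "laplace (laplace (\<lambda>y. cl_vec y \<odot> f y \<odot> cl_vec y)) x
       = cl_scale 2 (cl_scale 2 (dirac_l (dirac_r f) x)) + cl_scale 2 (cl_scale 2 (dirac_l (dirac_r f) x))"
    if x: "x \<in> \<Omega>" for x
    by (simp add: laplace_square_x_f_x[OF x] vanish[OF x] commute[OF x])
  show "inframonogenic_on \<Omega> f \<longleftrightarrow> (\<forall>x\<in>\<Omega>. dirac_l (dirac_l (dirac_l (\<lambda>y. f y \<odot> cl_vec y))) x = 0)"
    unfolding inframonogenic_on_iff using e1 by (simp add: cl_scale_neg_two_eq_0_iff)
  show "inframonogenic_on \<Omega> f \<longleftrightarrow> (\<forall>x\<in>\<Omega>. dirac_r (dirac_r (dirac_r (\<lambda>y. cl_vec y \<odot> f y))) x = 0)"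
    unfolding inframonogenic_on_iff using e2 by (simp add: cl_scale_neg_two_eq_0_iff)
  show "inframonogenic_on \<Omega> f \<longleftrightarrow> (\<forall>x\<in>\<Omega>. laplace (laplace (\<lambda>y. cl_vec y \<odot> f y \<odot> cl_vec y)) x = 0)"
    unfolding inframonogenic_on_iff
    by (intro ball_cong refl) (simp only: e3 cl_scale_eight_eq_0_iff)
qed

text \<open>If f is inframonogenic, the three expressions equal -T (\<Delta> f), -T (\<Delta> f) and
  4 T (\<Delta> f); for odd m the operator T is injective, so each of them vanishes exactly
  where f is harmonic.\<close>

lemma inframonogenic_case:
  assumes odd: "odd CARD('n)" and "inframonogenic_on \<Omega> f"
  shows "harmonic_on \<Omega> f \<longleftrightarrow> (\<forall>x\<in>\<Omega>. dirac_l (dirac_l (dirac_l (\<lambda>y. f y \<odot> cl_vec y))) x = 0)"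
    and "harmonic_on \<Omega> f \<longleftrightarrow> (\<forall>x\<in>\<Omega>. dirac_r (dirac_r (dirac_r (\<lambda>y. cl_vec y \<odot> f y))) x = 0)"
    and "harmonic_on \<Omega> f \<longleftrightarrow> (\<forall>x\<in>\<Omega>. laplace (laplace (\<lambda>y. cl_vec y \<odot> f y \<odot> cl_vec y)) x = 0)"
proof -
  have "\<forall>y\<in>\<Omega>. dirac_l (dirac_r f) y = 0" using assms(2) by (simp add: inframonogenic_on_iff)
  note vanish = inframonogenic_consequences[OF this]
  have T0: "sandwich a = 0 \<longleftrightarrow> a = 0" for a :: "'n clifford" by (rule sandwich_eq_0_iff[OF odd])
  have e1: "dirac_l (dirac_l (dirac_l (\<lambda>y. f y \<odot> cl_vec y))) x = - sandwich (laplace f x)"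
    if x: "x \<in> \<Omega>" for x
    by (simp add: dirac_l_cube_f_x[OF x] vanish[OF x] sandwich_uminus)
  have e2: "dirac_r (dirac_r (dirac_r (\<lambda>y. cl_vec y \<odot> f y))) x = - sandwich (laplace f x)"
    if x: "x \<in> \<Omega>" for x
    by (simp add: dirac_r_cube_x_f[OF x] vanish[OF x] sandwich_uminus)
  have e3: "laplace (laplace (\<lambda>y. cl_vec y \<odot> f y \<odot> cl_vec y)) x
       = cl_scale 2 (sandwich (laplace f x)) + cl_scale 2 (sandwich (laplace f x))"
    if x: "x \<in> \<Omega>" for x
    by (simp add: laplace_square_x_f_x[OF x] vanish[OF x])
  show "harmonic_on \<Omega> f \<longleftrightarrow> (\<forall>x\<in>\<Omega>. dirac_l (dirac_l (dirac_l (\<lambda>y. f y \<odot> cl_vec y))) x = 0)"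
    unfolding harmonic_on_def using e1 T0 by simp
  show "harmonic_on \<Omega> f \<longleftrightarrow> (\<forall>x\<in>\<Omega>. dirac_r (dirac_r (dirac_r (\<lambda>y. cl_vec y \<odot> f y))) x = 0)"
    unfolding harmonic_on_def using e2 T0 by simp
  show "harmonic_on \<Omega> f \<longleftrightarrow> (\<forall>x\<in>\<Omega>. laplace (laplace (\<lambda>y. cl_vec y \<odot> f y \<odot> cl_vec y)) x = 0)"
    unfolding harmonic_on_def
    by (intro ball_cong refl) (simp only: e3 cl_scale_four_eq_0_iff T0)
qed

end

end

theorem mainTheorem11:
  fixes f :: "real ^ 'n::{finite,linorder} \<Rightarrow> 'n::{finite,linorder} clifford"
    and \<Omega> :: "(real ^ 'n::{finite,linorder}) set"
  assumes "odd (card (UNIV :: 'n::{finite,linorder} set))"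
    and "open \<Omega>"
    and "Ck 4 \<Omega> f"
  defines "c1 \<equiv> (\<forall>x\<in>\<Omega>. dirac_l (dirac_l (dirac_l (\<lambda>y. f y \<odot> cl_vec y))) x = 0)"
    and "c2 \<equiv> (\<forall>x\<in>\<Omega>. dirac_r (dirac_r (dirac_r (\<lambda>y. cl_vec y \<odot> f y))) x = 0)"
    and "c3 \<equiv> (\<forall>x\<in>\<Omega>. laplace (laplace (\<lambda>y. cl_vec y \<odot> f y \<odot> cl_vec y)) x = 0)"
  shows "(harmonic_on \<Omega> f \<longrightarrow>
            (inframonogenic_on \<Omega> f \<longleftrightarrow> c1) \<and>
            (inframonogenic_on \<Omega> f \<longleftrightarrow> c2) \<and>
            (inframonogenic_on \<Omega> f \<longleftrightarrow> c3))
       \<and> (inframonogenic_on \<Omega> f \<longrightarrow>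
            (harmonic_on \<Omega> f \<longleftrightarrow> c1) \<and>
            (harmonic_on \<Omega> f \<longleftrightarrow> c2) \<and>
            (harmonic_on \<Omega> f \<longleftrightarrow> c3))"
  unfolding c1_def c2_def c3_def
  using harmonic_case[OF assms(2,3)] inframonogenic_case[OF assms(2,3,1)] by blast

end
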